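(* Let $\Lambda$ be a finite coordinatewise-irreducible $k$-graph with path groupoid $\mathcal{G}$, let $r\in(0,\infty)^k$, and let $c:\mathcal{G}\to\mathbb{R}$ be the cocycle $c(x,n,y)=r\cdot n$. Suppose $\mu$ is a nonzero Borel probability measure on $\mathcal{G}^{(0)}=W_\Lambda$ which is quasi-invariant with Radon–Nikodym cocycle $e^{-c}$. Then: (1) $r_i\ge\ln\rho(A_i)$ for all $1\le i\le k$; (2) for $l\in\{1,\dots,k\}$, if $\mu\big(\bigcup_{\{n\in(\mathbb{N}\cup\{\infty\})^k:\,n_l=\infty\}}\Lambda^n\big)\ne0$ then $r_l=\ln\rho(A_l)$; in particular, if $\mu(\Lambda^\infty)\neq0$ then $r_i=\ln\rho(A_i)$ for all $i$.
   Context: $\Lambda$ is a $k$-graph (countable category with degree functor $d:\Lambda\to\mathbb{N}^k$ satisfying the factorisation property); finite: each $d^{-1}(n)$ finite. Vertex matrices $A_i(v,w)=|v\Lambda^{e_i}w|$, spectral radii $\rho(A_i)$; coordinatewise irreducible: every $A_i$ irreducible. Paths: for $n\in(\mathbb{N}\cup\{\infty\})^k$, $\Lambda^n$ = degree-preserving functors from $\Omega_{k,n}$ (morphisms $(p,q)$, $p\le q\le n$) to $\Lambda$; $\Lambda^\infty=\Lambda^{(\infty,\dots,\infty)}$; $W_\Lambda=\bigcup_n\Lambda^n$ with $Z(\lambda)=\{x: d(\lambda)\le d(x),x(0,d(\lambda))=\lambda\}$ and topology with basis $Z(\lambda)\setminus\bigcup_{\alpha\in G}Z(\lambda\alpha)$.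 Shift $\sigma^n(x)(p,q)=x(p+n,q+n)$. Path groupoid $\mathcal{G}=\{(x,p-q,y): p\le d(x), q\le d(y), \sigma^p(x)=\sigma^q(y)\}$ with $r(x,g,y)=x$, $s(x,g,y)=y$, $(x,g,y)(y,h,z)=(x,g+h,z)$, topologised with basis of compact open bisections $Z(\lambda*\eta\setminus G)$ (where $Z(\lambda*\eta)=\{(x,d(\lambda)-d(\eta),y): x\in Z(\lambda), y\in Z(\eta), \sigma^{d(\lambda)}(x)=\sigma^{d(\eta)}(y)\}$), making it an étale groupoid. A measure $\mu$ on $\mathcal{G}^{(0)}$ is quasi-invariant with Radon–Nikodym cocycle $e^{-c}$ if for every open bisection $U\subset\mathcal{G}$, $\mu(r(U))=\int_{s(U)}e^{-c(g_x)}\,d\mu(x)$, where $g_x$ is the unique element of $U$ with $s(g_x)=x$; e.g. $\mu(Z(\lambda))=e^{-r\cdot d(\lambda)}\mu(Z(s(\lambda)))$. *)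

theory Defs
  imports "HOL-Analysis.Abstract_Topology" "HOL-Probability.Probability_Measure"
    "HOL-Library.Extended_Nat" "Jordan_Normal_Form.Spectral_Radius"
begin

text \<open>A k-graph is presented by its set of morphisms L, source and range maps
  (objects are identified with their identity morphisms), a partial composition
  (defined when src lam = rng mu) and a degree functor into 'k => nat, where the
  finite type 'k indexes the coordinates 1..k.\<close>

definition kgraph ::
  "'m set \<Rightarrow> ('m \<Rightarrow> 'm) \<Rightarrow> ('m \<Rightarrow> 'm) \<Rightarrow> ('m \<Rightarrow> 'm \<Rightarrow> 'm) \<Rightarrow> ('m \<Rightarrow> ('k::finite \<Rightarrow> nat)) \<Rightarrow> bool" where
  "kgraph L src rng cmp deg \<longleftrightarrow>
     countable L \<and>
     (\<forall>l\<in>L. src l \<in> L \<and> rng l \<in> L \<and> src (src l) = src l \<and> rng (src l) = src l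
              \<and> src (rng l) = rng l \<and> rng (rng l) = rng l) \<and>
     (\<forall>l\<in>L. \<forall>m\<in>L. src l = rng m \<longrightarrow>
        cmp l m \<in> L \<and> rng (cmp l m) = rng l \<and> src (cmp l m) = src m) \<and>
     (\<forall>l\<in>L. cmp (rng l) l = l \<and> cmp l (src l) = l) \<and>
     (\<forall>l\<in>L. \<forall>m\<in>L. \<forall>n\<in>L. src l = rng m \<and> src m = rng n \<longrightarrow>
        cmp (cmp l m) n = cmp l (cmp m n)) \<and>
     (\<forall>l\<in>L. \<forall>m\<in>L. src l = rng m \<longrightarrow> deg (cmp l m) = (\<lambda>j. deg l j + deg m j)) \<and>
     (\<forall>l\<in>L. \<forall>m n. deg l = (\<lambda>j. m j + n j) \<longrightarrow>
        (\<exists>!(a, b). a \<in> L \<and> b \<in> L \<and> src a = rng b \<and> deg a = m \<and> deg b = n \<and> cmp a b = l))"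

definition finite_kgraph :: "'m set \<Rightarrow> ('m \<Rightarrow> ('k::finite \<Rightarrow> nat)) \<Rightarrow> bool" where
  "finite_kgraph L deg \<longleftrightarrow> (\<forall>n. finite {l\<in>L. deg l = n})"

definition unit_deg :: "'k \<Rightarrow> ('k \<Rightarrow> nat)" where
  "unit_deg i = (\<lambda>j. if j = i then 1 else 0)"

definition vertices :: "'m set \<Rightarrow> ('m \<Rightarrow> 'm) \<Rightarrow> 'm set" where
  "vertices L src = {v\<in>L. src v = v}"

definition vlist :: "'m set \<Rightarrow> ('m \<Rightarrow> 'm) \<Rightarrow> 'm list" where
  "vlist L src = (SOME vs. distinct vs \<and> set vs = vertices L src)"

definition vertex_matrix ::
  "'m set \<Rightarrow> ('m \<Rightarrow> 'm) \<Rightarrow> ('m \<Rightarrow> 'm) \<Rightarrow> ('m \<Rightarrow> ('k::finite \<Rightarrow> nat)) \<Rightarrow> 'k \<Rightarrow> 'a::semiring_1 mat" where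
  "vertex_matrix L src rng deg i =
     (let vs = vlist L src in
      Matrix.mat (length vs) (length vs)
        (\<lambda>(a, b). of_nat (card {l\<in>L. rng l = vs ! a \<and> deg l = unit_deg i \<and> src l = vs ! b})))"

definition irreducible_mat :: "real mat \<Rightarrow> bool" where
  "irreducible_mat M \<longleftrightarrow>
     (\<forall>a<dim_row M. \<forall>b<dim_row M. \<exists>n\<ge>1. (M ^\<^sub>m n) $$ (a, b) > 0)"

definition coord_irreducible ::
  "'m set \<Rightarrow> ('m \<Rightarrow> 'm) \<Rightarrow> ('m \<Rightarrow> 'm) \<Rightarrow> ('m \<Rightarrow> ('k::finite \<Rightarrow> nat)) \<Rightarrow> bool" where
  "coord_irreducible L src rng deg \<longleftrightarrow> (\<forall>i. irreducible_mat (vertex_matrix L src rng deg i))"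

definition rho :: "'m set \<Rightarrow> ('m \<Rightarrow> 'm) \<Rightarrow> ('m \<Rightarrow> 'm) \<Rightarrow> ('m \<Rightarrow> ('k::finite \<Rightarrow> nat)) \<Rightarrow> 'k \<Rightarrow> real" where
  "rho L src rng deg i = spectral_radius (vertex_matrix L src rng deg i)"

definition le_edeg :: "('k \<Rightarrow> nat) \<Rightarrow> ('k \<Rightarrow> enat) \<Rightarrow> bool" where
  "le_edeg p n \<longleftrightarrow> (\<forall>j. enat (p j) \<le> n j)"

text \<open>A path of degree n is a degree-preserving functor from Omega_{k,n}, recorded as the
  pair (n, x) where x (p,q) is the image of the morphism (p,q), p <= q <= n
  (and undefined elsewhere). The object p is sent to (the identity) x (p,p).\<close>
definition is_path ::
  "'m set \<Rightarrow> ('m \<Rightarrow> 'm) \<Rightarrow> ('m \<Rightarrow> 'm) \<Rightarrow> ('m \<Rightarrow> 'm \<Rightarrow> 'm) \<Rightarrow> ('m \<Rightarrow> ('k::finite \<Rightarrow> nat))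
    \<Rightarrow> ('k \<Rightarrow> enat) \<Rightarrow> (('k \<Rightarrow> nat) \<times> ('k \<Rightarrow> nat) \<Rightarrow> 'm) \<Rightarrow> bool" where
  "is_path L src rng cmp deg n x \<longleftrightarrow>
     (\<forall>p q. p \<le> q \<and> le_edeg q n \<longrightarrow>
        x (p, q) \<in> L \<and> deg (x (p, q)) = (\<lambda>j. q j - p j)
        \<and> rng (x (p, q)) = x (p, p) \<and> src (x (p, q)) = x (q, q)) \<and>
     (\<forall>p. le_edeg p n \<longrightarrow> src (x (p, p)) = x (p, p)) \<and>
     (\<forall>p q t. p \<le> q \<and> q \<le> t \<and> le_edeg t n \<longrightarrow> cmp (x (p, q)) (x (q, t)) = x (p, t)) \<and>
     (\<forall>p q. \<not> (p \<le> q \<and> le_edeg q n) \<longrightarrow> x (p, q) = undefined)"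

type_synonym ('k, 'm) kpath = "('k \<Rightarrow> enat) \<times> (('k \<Rightarrow> nat) \<times> ('k \<Rightarrow> nat) \<Rightarrow> 'm)"

definition WL ::
  "'m set \<Rightarrow> ('m \<Rightarrow> 'm) \<Rightarrow> ('m \<Rightarrow> 'm) \<Rightarrow> ('m \<Rightarrow> 'm \<Rightarrow> 'm) \<Rightarrow> ('m \<Rightarrow> ('k::finite \<Rightarrow> nat))
    \<Rightarrow> ('k, 'm) kpath set" where
  "WL L src rng cmp deg = {(n, x). is_path L src rng cmp deg n x}"

definition cylZ ::
  "'m set \<Rightarrow> ('m \<Rightarrow> 'm) \<Rightarrow> ('m \<Rightarrow> 'm) \<Rightarrow> ('m \<Rightarrow> 'm \<Rightarrow> 'm) \<Rightarrow> ('m \<Rightarrow> ('k::finite \<Rightarrow> nat))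
    \<Rightarrow> 'm \<Rightarrow> ('k, 'm) kpath set" where
  "cylZ L src rng cmp deg l =
     {y\<in>WL L src rng cmp deg. le_edeg (deg l) (fst y) \<and> snd y ((\<lambda>_. 0), deg l) = l}"

definition basisW ::
  "'m set \<Rightarrow> ('m \<Rightarrow> 'm) \<Rightarrow> ('m \<Rightarrow> 'm) \<Rightarrow> ('m \<Rightarrow> 'm \<Rightarrow> 'm) \<Rightarrow> ('m \<Rightarrow> ('k::finite \<Rightarrow> nat))
    \<Rightarrow> ('k, 'm) kpath set set" where
  "basisW L src rng cmp deg =
     {cylZ L src rng cmp deg l - (\<Union>a\<in>G. cylZ L src rng cmp deg (cmp l a)) | l G.
        l \<in> L \<and> finite G \<and> G \<subseteq> {a\<in>L. rng a = src l}}"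

definition topW ::
  "'m set \<Rightarrow> ('m \<Rightarrow> 'm) \<Rightarrow> ('m \<Rightarrow> 'm) \<Rightarrow> ('m \<Rightarrow> 'm \<Rightarrow> 'm) \<Rightarrow> ('m \<Rightarrow> ('k::finite \<Rightarrow> nat))
    \<Rightarrow> ('k, 'm) kpath topology" where
  "topW L src rng cmp deg = topology_generated_by (basisW L src rng cmp deg)"

definition shift :: "('k \<Rightarrow> nat) \<Rightarrow> ('k, 'm) kpath \<Rightarrow> ('k, 'm) kpath" where
  "shift m y =
     (let n' = (\<lambda>j. fst y j - enat (m j)) in
      (n', \<lambda>(p, q). if p \<le> q \<and> le_edeg q n' then snd y ((\<lambda>j. p j + m j), (\<lambda>j. q j + m j))
                    else undefined))"

type_synonym ('k, 'm) garrow = "('k, 'm) kpath \<times> ('k \<Rightarrow> int) \<times> ('k, 'm) kpath"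

definition path_groupoid ::
  "'m set \<Rightarrow> ('m \<Rightarrow> 'm) \<Rightarrow> ('m \<Rightarrow> 'm) \<Rightarrow> ('m \<Rightarrow> 'm \<Rightarrow> 'm) \<Rightarrow> ('m \<Rightarrow> ('k::finite \<Rightarrow> nat))
    \<Rightarrow> ('k, 'm) garrow set" where
  "path_groupoid L src rng cmp deg =
     {(x, g, y). x \<in> WL L src rng cmp deg \<and> y \<in> WL L src rng cmp deg \<and>
        (\<exists>p q. le_edeg p (fst x) \<and> le_edeg q (fst y) \<and> shift p x = shift q y
               \<and> g = (\<lambda>j. int (p j) - int (q j)))}"

definition Zstar ::
  "'m set \<Rightarrow> ('m \<Rightarrow> 'm) \<Rightarrow> ('m \<Rightarrow> 'm) \<Rightarrow> ('m \<Rightarrow> 'm \<Rightarrow> 'm) \<Rightarrow> ('m \<Rightarrow> ('k::finite \<Rightarrow> nat))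
    \<Rightarrow> 'm \<Rightarrow> 'm \<Rightarrow> ('k, 'm) garrow set" where
  "Zstar L src rng cmp deg l e =
     {(x, g, y). x \<in> cylZ L src rng cmp deg l \<and> y \<in> cylZ L src rng cmp deg e \<and>
        shift (deg l) x = shift (deg e) y \<and> g = (\<lambda>j. int (deg l j) - int (deg e j))}"

definition basisG ::
  "'m set \<Rightarrow> ('m \<Rightarrow> 'm) \<Rightarrow> ('m \<Rightarrow> 'm) \<Rightarrow> ('m \<Rightarrow> 'm \<Rightarrow> 'm) \<Rightarrow> ('m \<Rightarrow> ('k::finite \<Rightarrow> nat))
    \<Rightarrow> ('k, 'm) garrow set set" where
  "basisG L src rng cmp deg =
     {{(x, g, y) \<in> Zstar L src rng cmp deg l e. x \<notin> (\<Union>a\<in>G. cylZ L src rng cmp deg (cmp l a))}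
        | l e G. l \<in> L \<and> e \<in> L \<and> src l = src e \<and> finite G \<and> G \<subseteq> {a\<in>L. rng a = src l}}"

definition topG ::
  "'m set \<Rightarrow> ('m \<Rightarrow> 'm) \<Rightarrow> ('m \<Rightarrow> 'm) \<Rightarrow> ('m \<Rightarrow> 'm \<Rightarrow> 'm) \<Rightarrow> ('m \<Rightarrow> ('k::finite \<Rightarrow> nat))
    \<Rightarrow> ('k, 'm) garrow topology" where
  "topG L src rng cmp deg = topology_generated_by (basisG L src rng cmp deg)"

definition g_range :: "('k, 'm) garrow \<Rightarrow> ('k, 'm) kpath" where
  "g_range g = fst g"

definition g_source :: "('k, 'm) garrow \<Rightarrow> ('k, 'm) kpath" where
  "g_source g = snd (snd g)"

definition open_bisection ::
  "'m set \<Rightarrow> ('m \<Rightarrow> 'm) \<Rightarrow> ('m \<Rightarrow> 'm) \<Rightarrow> ('m \<Rightarrow> 'm \<Rightarrow> 'm) \<Rightarrow> ('m \<Rightarrow> ('k::finite \<Rightarrow> nat))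
    \<Rightarrow> ('k, 'm) garrow set \<Rightarrow> bool" where
  "open_bisection L src rng cmp deg U \<longleftrightarrow>
     openin (topG L src rng cmp deg) U \<and> inj_on g_range U \<and> inj_on g_source U"

definition dot_cocycle :: "('k::finite \<Rightarrow> real) \<Rightarrow> ('k, 'm) garrow \<Rightarrow> real" where
  "dot_cocycle r g = (\<Sum>j\<in>UNIV. r j * real_of_int (fst (snd g) j))"

definition quasi_invariant ::
  "'m set \<Rightarrow> ('m \<Rightarrow> 'm) \<Rightarrow> ('m \<Rightarrow> 'm) \<Rightarrow> ('m \<Rightarrow> 'm \<Rightarrow> 'm) \<Rightarrow> ('m \<Rightarrow> ('k::finite \<Rightarrow> nat))
    \<Rightarrow> (('k, 'm) garrow \<Rightarrow> real) \<Rightarrow> ('k, 'm) kpath measure \<Rightarrow> bool" where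
  "quasi_invariant L src rng cmp deg c \<mu> \<longleftrightarrow>
     (\<forall>U. open_bisection L src rng cmp deg U \<longrightarrow>
        emeasure \<mu> (g_range ` U) =
          (\<integral>\<^sup>+ x. ennreal (exp (- c (THE g. g \<in> U \<and> g_source g = x))) * indicator (g_source ` U) x \<partial>\<mu>))"

definition borel_measure_on_W ::
  "'m set \<Rightarrow> ('m \<Rightarrow> 'm) \<Rightarrow> ('m \<Rightarrow> 'm) \<Rightarrow> ('m \<Rightarrow> 'm \<Rightarrow> 'm) \<Rightarrow> ('m \<Rightarrow> ('k::finite \<Rightarrow> nat))
    \<Rightarrow> ('k, 'm) kpath measure \<Rightarrow> bool" where
  "borel_measure_on_W L src rng cmp deg \<mu> \<longleftrightarrow>
     space \<mu> = WL L src rng cmp deg \<and>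
     sets \<mu> = sigma_sets (WL L src rng cmp deg) {U. openin (topW L src rng cmp deg) U}"

end

theory Submission
  imports Defs
begin

text \<open>
  For a vertex v put m(v) = \<mu>(Z(v)). Quasi-invariance, applied to the bisection Z(\<lambda> * s(\<lambda>)),
  gives \<mu>(Z(\<lambda>)) = exp(-r \<cdot> d(\<lambda>)) \<mu>(Z(s(\<lambda>))). Since Z(v) contains the disjoint union of the
  Z(\<lambda>), \<lambda> \<in> v\<Lambda>^e_i, the vector m satisfies A_i m \<le> exp(r_i) m. It is nonzero because \<mu> is a
  probability measure and W_\<Lambda> is the union of the Z(v), hence strictly positive by
  irreducibility; and a strictly positive subinvariant vector bounds the modulus of every
  eigenvalue, so \<rho>(A_i) \<le> exp(r_i).

  The same computation, now with equality, shows that the masses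
  t_N(v) = \<mu>(Z(v) \<inter> {x. d(x)_i \<ge> N}) satisfy A_i t_N = exp(r_i) t_(N+1). They decrease to
  h(v) = \<mu>(Z(v) \<inter> {x. d(x)_i = \<infinity>}), so A_i h = exp(r_i) h. If the paths of infinite i-th
  degree carry mass then h \<noteq> 0, so exp(r_i) is an eigenvalue of A_i and exp(r_i) \<le> \<rho>(A_i).
\<close>

section \<open>Subinvariant vectors of nonnegative matrices\<close>

lemma mat_pow_Suc_index:
  assumes A: "(A :: 'a :: comm_semiring_1 mat) \<in> carrier_mat n n" and "a < n" "b < n"
  shows "(A ^\<^sub>m Suc N) $$ (a, b) = (\<Sum>c<n. (A ^\<^sub>m N) $$ (a, c) * A $$ (c, b))"
proof -
  have P: "A ^\<^sub>m N \<in> carrier_mat n n" using A by simp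
  have "(A ^\<^sub>m Suc N) $$ (a, b) = row (A ^\<^sub>m N) a \<bullet> col A b" using P A assms by simp
  also have "\<dots> = (\<Sum>c<n. (A ^\<^sub>m N) $$ (a, c) * A $$ (c, b))"
    unfolding scalar_prod_def using P A assms by (auto simp: atLeast0LessThan intro!: sum.cong)
  finally show ?thesis .
qed

lemma mult_mat_vec_index_sum:
  assumes A: "(A :: 'a :: comm_semiring_1 mat) \<in> carrier_mat n n" and v: "v \<in> carrier_vec n" and "a < n"
  shows "(A *\<^sub>v v) $ a = (\<Sum>b<n. A $$ (a, b) * v $ b)"
  using assms by (auto simp: scalar_prod_def atLeast0LessThan intro!: sum.cong)

lemma max_ratio_index:
  fixes v :: "complex vec" and m :: "nat \<Rightarrow> real"
  assumes "v \<in> carrier_vec n" "v \<noteq> 0\<^sub>v n" and pos: "\<And>b. b < n \<Longrightarrow> m b > 0"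
  obtains a0 t where "a0 < n" "t > 0" "cmod (v $ a0) = t * m a0"
    "\<And>b. b < n \<Longrightarrow> cmod (v $ b) \<le> t * m b"
proof -
  let ?q = "\<lambda>b. cmod (v $ b) / m b"
  define t where "t = Max (?q ` {..<n})"
  obtain a1 where a1: "a1 < n" "v $ a1 \<noteq> 0"
    using assms(1,2) by (metis carrier_vecD eq_vecI index_zero_vec)
  then have fne: "finite (?q ` {..<n})" "?q ` {..<n} \<noteq> {}" by auto
  then have q_le: "?q b \<le> t" if "b < n" for b unfolding t_def using that by (intro Max_ge) auto
  obtain a0 where a0: "a0 < n" "?q a0 = t" using Max_in[OF fne] unfolding t_def by auto
  have "0 < ?q a1" using a1 pos[OF a1(1)] by simp
  then have "t > 0" using q_le[OF a1(1)] by linarith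
  moreover have "cmod (v $ b) \<le> t * m b" if "b < n" for b
    using q_le[OF that] pos[OF that] by (simp add: divide_le_eq)
  ultimately show ?thesis using that a0 pos[OF a0(1)] by (simp add: field_simps)
qed

locale subinvariant_vector =
  fixes A :: "real mat" and n :: nat and m :: "nat \<Rightarrow> real" and c :: real
  assumes carrier: "A \<in> carrier_mat n n"
    and entry_nonneg: "\<And>a b. a < n \<Longrightarrow> b < n \<Longrightarrow> 0 \<le> A $$ (a, b)"
    and nonneg: "\<And>a. a < n \<Longrightarrow> 0 \<le> m a"
    and subinvariant: "\<And>a. a < n \<Longrightarrow> (\<Sum>b<n. A $$ (a, b) * m b) \<le> c * m a"
begin

lemma pos_of_pos_entry:
  assumes "a < n" "b < n" "A $$ (a, b) > 0" "m b > 0"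
  shows "m a > 0"
proof -
  have "0 < A $$ (a, b) * m b" using assms by simp
  also have "\<dots> \<le> (\<Sum>b'<n. A $$ (a, b') * m b')"
    using assms nonneg entry_nonneg by (intro member_le_sum) auto
  also have "\<dots> \<le> c * m a" using subinvariant assms(1) .
  finally show ?thesis using nonneg[OF assms(1)] by (cases "m a = 0") auto
qed

lemma pos_of_pos_pow_entry:
  assumes "a < n" "b < n" "(A ^\<^sub>m N) $$ (a, b) > 0" "m b > 0"
  shows "m a > 0"
  using assms
proof (induction N arbitrary: b)
  case 0
  then show ?case using carrier by (auto split: if_splits)
next
  case (Suc N)
  have "0 < (\<Sum>d<n. (A ^\<^sub>m N) $$ (a, d) * A $$ (d, b))"
    using Suc.prems mat_pow_Suc_index[OF carrier] by simp
  then obtain d where d: "d < n" "0 < (A ^\<^sub>m N) $$ (a, d) * A $$ (d, b)"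
    by (metis (no_types, lifting) lessThan_iff not_less sum_nonpos)
  have "A $$ (d, b) \<ge> 0" using entry_nonneg d(1) Suc.prems(2) .
  then have pos: "A $$ (d, b) > 0" "(A ^\<^sub>m N) $$ (a, d) > 0"
    using d(2) by (auto simp: zero_less_mult_iff)
  show ?case using Suc.IH[OF Suc.prems(1) d(1) pos(2)] pos_of_pos_entry[OF d(1) Suc.prems(2) pos(1) Suc.prems(4)] .
qed

lemma pos_of_irreducible:
  assumes "irreducible_mat A" "a < n" "b < n" "m b > 0"
  shows "m a > 0"
proof -
  obtain N where "(A ^\<^sub>m N) $$ (a, b) > 0"
    using assms carrier unfolding irreducible_mat_def by auto
  then show ?thesis using pos_of_pos_pow_entry assms by blast
qed

lemma eigenvalue_norm_le:
  assumes pos: "\<And>a. a < n \<Longrightarrow> m a > 0"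
    and "eigenvalue (map_mat complex_of_real A) lam"
  shows "cmod lam \<le> c"
proof -
  let ?B = "map_mat complex_of_real A"
  have B: "?B \<in> carrier_mat n n" using carrier by simp
  obtain v where v: "v \<in> carrier_vec n" "v \<noteq> 0\<^sub>v n" "?B *\<^sub>v v = lam \<cdot>\<^sub>v v"
    using assms(2) B unfolding eigenvalue_def eigenvector_def by auto
  obtain a0 t where a0: "a0 < n" "t > 0" "cmod (v $ a0) = t * m a0"
    and v_le: "\<And>b. b < n \<Longrightarrow> cmod (v $ b) \<le> t * m b"
    using max_ratio_index[of v n m, OF v(1,2) pos] by blast
  have "lam * v $ a0 = (?B *\<^sub>v v) $ a0" using v a0(1) by simp
  also have "\<dots> = (\<Sum>b<n. complex_of_real (A $$ (a0, b)) * v $ b)"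
    using mult_mat_vec_index_sum[OF B v(1) a0(1)] carrier a0(1) by simp
  finally have "cmod lam * cmod (v $ a0) = cmod (\<Sum>b<n. complex_of_real (A $$ (a0, b)) * v $ b)"
    by (simp only: norm_mult[symmetric])
  also have "\<dots> \<le> (\<Sum>b<n. cmod (complex_of_real (A $$ (a0, b)) * v $ b))"
    by (rule norm_sum)
  also have "\<dots> = (\<Sum>b<n. A $$ (a0, b) * cmod (v $ b))"
    using entry_nonneg a0(1) by (intro sum.cong refl) (simp add: norm_mult)
  also have "\<dots> \<le> (\<Sum>b<n. A $$ (a0, b) * (t * m b))"
    using entry_nonneg a0(1) v_le by (intro sum_mono mult_left_mono) auto
  also have "\<dots> = t * (\<Sum>b<n. A $$ (a0, b) * m b)"
    by (simp add: sum_distrib_left mult.left_commute)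
  also have "\<dots> \<le> t * (c * m a0)" using subinvariant[OF a0(1)] a0(2) by simp
  also have "\<dots> = c * cmod (v $ a0)" using a0(3) by simp
  finally show ?thesis using a0 pos[OF a0(1)] by simp
qed

lemma spectral_radius_le:
  assumes "\<And>a. a < n \<Longrightarrow> m a > 0" and "n > 0"
  shows "spectral_radius (map_mat complex_of_real A) \<le> c"
proof -
  have "map_mat complex_of_real A \<in> carrier_mat n n" using carrier by simp
  from spectral_radius_mem_max(1)[OF this \<open>n > 0\<close>] obtain lam
    where "eigenvalue (map_mat complex_of_real A) lam"
      "spectral_radius (map_mat complex_of_real A) = cmod lam"
    unfolding spectrum_def by auto
  then show ?thesis using eigenvalue_norm_le[OF assms(1)] by simp
qed

end

lemma eigenvalue_of_real_eigenfunction: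
  fixes A :: "real mat" and h :: "nat \<Rightarrow> real"
  assumes A: "A \<in> carrier_mat n n" and "a0 < n" "h a0 \<noteq> 0"
    and eigen: "\<And>a. a < n \<Longrightarrow> (\<Sum>b<n. A $$ (a, b) * h b) = c * h a"
  shows "eigenvalue (map_mat complex_of_real A) (complex_of_real c)"
proof -
  let ?B = "map_mat complex_of_real A" and ?w = "vec n (\<lambda>a. complex_of_real (h a))"
  have B: "?B \<in> carrier_mat n n" using A by simp
  have "?B *\<^sub>v ?w = complex_of_real c \<cdot>\<^sub>v ?w"
  proof (rule eq_vecI)
    fix a assume "a < dim_vec (complex_of_real c \<cdot>\<^sub>v ?w)"
    then have a: "a < n" by simp
    have "(?B *\<^sub>v ?w) $ a = complex_of_real (\<Sum>b<n. A $$ (a, b) * h b)"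
      using mult_mat_vec_index_sum[OF B _ a, of ?w] A a by simp
    then show "(?B *\<^sub>v ?w) $ a = (complex_of_real c \<cdot>\<^sub>v ?w) $ a"
      using eigen[OF a] a by simp
  qed (use B in simp)
  moreover have "?w \<noteq> 0\<^sub>v n" using assms(2,3) by (metis index_vec index_zero_vec(1) of_real_eq_0_iff)
  ultimately show ?thesis unfolding eigenvalue_def eigenvector_def using B
    by (intro exI[of _ ?w]) auto
qed

lemma spectral_radius_nonneg:
  assumes "A \<in> carrier_mat n n" "n > 0"
  shows "0 \<le> spectral_radius A"
proof -
  obtain lam :: complex where "spectral_radius A = norm lam" using spectral_radius_mem_max(1)[OF assms] by auto
  then show ?thesis by simp
qed

lemma enat_le_minus_iff: "enat m \<le> N \<Longrightarrow> enat q \<le> N - enat m \<longleftrightarrow> enat (q + m) \<le> N"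
  by (cases N) auto

lemma enat_le_add_minus: "m \<le> t \<Longrightarrow> enat t \<le> enat m + N \<Longrightarrow> enat (t - m) \<le> (N::enat)"
  by (cases N) auto

lemma enat_add_le_add: "enat a \<le> N \<Longrightarrow> enat (a + b) \<le> enat b + N"
  by (cases N) auto

lemma enat_add_minus_cancel: "enat a \<le> b \<Longrightarrow> enat a + (b - enat a) = (b::enat)"
  by (cases b) auto

lemma all_enat_le_iff: "(\<forall>N. enat N \<le> y) \<longleftrightarrow> y = \<infinity>"
proof (cases y)
  case (enat k)
  then show ?thesis by (auto intro!: exI[of _ "Suc k"])
qed simp

lemma le_edeg_trans: "q \<le> t \<Longrightarrow> le_edeg t n \<Longrightarrow> le_edeg q n"
  unfolding le_edeg_def le_fun_def by (meson enat_ord_simps(1) order_trans)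

lemma le_edeg_zero [simp]: "le_edeg (\<lambda>_. 0) n"
  unfolding le_edeg_def by (simp add: zero_enat_def[symmetric])

lemma le_edeg_shift_iff:
  "le_edeg m n \<Longrightarrow> le_edeg q (\<lambda>j. n j - enat (m j)) \<longleftrightarrow> le_edeg (\<lambda>j. q j + m j) n"
  unfolding le_edeg_def by (simp add: enat_le_minus_iff)

lemma le_edeg_unit_deg_iff: "le_edeg (\<lambda>j. N * unit_deg i j) d \<longleftrightarrow> enat N \<le> d i"
  unfolding le_edeg_def unit_deg_def by (auto simp: zero_enat_def[symmetric] split: if_splits)

section \<open>Factorisation in a k-graph\<close>

locale k_graph =
  fixes L :: "'m set" and src rng :: "'m \<Rightarrow> 'm" and cmp :: "'m \<Rightarrow> 'm \<Rightarrow> 'm"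
    and deg :: "'m \<Rightarrow> ('k::finite \<Rightarrow> nat)"
  assumes kgraph: "kgraph L src rng cmp deg"
begin

lemma src_in: "l \<in> L \<Longrightarrow> src l \<in> L" and rng_in: "l \<in> L \<Longrightarrow> rng l \<in> L"
  and src_src: "l \<in> L \<Longrightarrow> src (src l) = src l" and rng_src: "l \<in> L \<Longrightarrow> rng (src l) = src l"
  and src_rng: "l \<in> L \<Longrightarrow> src (rng l) = rng l" and rng_rng: "l \<in> L \<Longrightarrow> rng (rng l) = rng l"
  and cmp_in: "l \<in> L \<Longrightarrow> m \<in> L \<Longrightarrow> src l = rng m \<Longrightarrow> cmp l m \<in> L"
  and rng_cmp: "l \<in> L \<Longrightarrow> m \<in> L \<Longrightarrow> src l = rng m \<Longrightarrow> rng (cmp l m) = rng l"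
  and src_cmp: "l \<in> L \<Longrightarrow> m \<in> L \<Longrightarrow> src l = rng m \<Longrightarrow> src (cmp l m) = src m"
  and deg_cmp: "l \<in> L \<Longrightarrow> m \<in> L \<Longrightarrow> src l = rng m \<Longrightarrow> deg (cmp l m) = (\<lambda>j. deg l j + deg m j)"
  and cmp_rng_left: "l \<in> L \<Longrightarrow> cmp (rng l) l = l" and cmp_src_right: "l \<in> L \<Longrightarrow> cmp l (src l) = l"
  using kgraph unfolding kgraph_def by auto

lemma cmp_assoc: "l \<in> L \<Longrightarrow> m \<in> L \<Longrightarrow> n \<in> L \<Longrightarrow> src l = rng m \<Longrightarrow> src m = rng n \<Longrightarrow>
   cmp (cmp l m) n = cmp l (cmp m n)"
  using kgraph unfolding kgraph_def by blast

lemma unique_factorisation: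
  "l \<in> L \<Longrightarrow> deg l = (\<lambda>j. m j + n j) \<Longrightarrow>
   \<exists>!(a, b). a \<in> L \<and> b \<in> L \<and> src a = rng b \<and> deg a = m \<and> deg b = n \<and> cmp a b = l"
  using kgraph unfolding kgraph_def by blast

lemma factorisation_unique:
  assumes "a \<in> L" "b \<in> L" "a' \<in> L" "b' \<in> L" "src a = rng b" "src a' = rng b'"
    "deg a = deg a'" "deg b = deg b'" "cmp a b = cmp a' b'"
  shows "a = a' \<and> b = b'"
proof -
  have "deg (cmp a b) = (\<lambda>j. deg a j + deg b j)" using assms deg_cmp by auto
  from unique_factorisation[OF cmp_in[OF assms(1,2,5)] this]
  have "(a, b) = (a', b')"
    by (elim alt_ex1E allE[of _ "(a, b)"] allE[of _ "(a', b')"]) (use assms in auto)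
  then show ?thesis by simp
qed

lemma factorisation_exists:
  assumes "l \<in> L" "p \<le> deg l"
  obtains a b where "a \<in> L" "b \<in> L" "src a = rng b" "deg a = p" "deg b = (\<lambda>j. deg l j - p j)"
    "cmp a b = l"
proof -
  have "deg l = (\<lambda>j. p j + (deg l j - p j))" using assms(2) by (auto simp: le_fun_def)
  from unique_factorisation[OF assms(1) this] show ?thesis using that by auto
qed

lemma deg_rng: "l \<in> L \<Longrightarrow> deg (rng l) = (\<lambda>_. 0)"
  using deg_cmp[of "rng l" l] cmp_rng_left[of l] by (auto simp: rng_in src_rng fun_eq_iff dest: fun_cong)

lemma deg_src: "l \<in> L \<Longrightarrow> deg (src l) = (\<lambda>_. 0)"
  using deg_cmp[of l "src l"] cmp_src_right[of l] by (auto simp: src_in rng_src fun_eq_iff dest: fun_cong)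

lemma vertex_of_deg_zero:
  assumes "l \<in> L" "deg l = (\<lambda>_. 0)"
  shows "src l = l" "rng l = l"
proof -
  have "rng l = l \<and> l = src l"
    using factorisation_unique[of "rng l" l l "src l"] assms
    by (simp add: rng_in src_in src_rng rng_src cmp_rng_left cmp_src_right deg_rng deg_src)
  then show "src l = l" "rng l = l" by auto
qed

lemma vertexD: "v \<in> vertices L src \<Longrightarrow> v \<in> L \<and> deg v = (\<lambda>_. 0) \<and> rng v = v"
  unfolding vertices_def using deg_src[of v] rng_src[of v] by auto

definition segment :: "'m \<Rightarrow> ('k \<Rightarrow> nat) \<Rightarrow> ('k \<Rightarrow> nat) \<Rightarrow> 'm" where
  "segment w p q = (THE c. \<exists>a b. a \<in> L \<and> b \<in> L \<and> c \<in> L \<and> src a = rng c \<and> src c = rng b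
      \<and> deg a = p \<and> deg c = (\<lambda>j. q j - p j) \<and> cmp a (cmp c b) = w)"

lemma segment_eqI:
  assumes "a \<in> L" "b \<in> L" "c \<in> L" "src a = rng c" "src c = rng b"
    "deg a = p" "deg c = (\<lambda>j. q j - p j)" "cmp a (cmp c b) = w"
  shows "segment w p q = c"
  unfolding segment_def
proof (rule the_equality)
  show "\<exists>a b. a \<in> L \<and> b \<in> L \<and> c \<in> L \<and> src a = rng c \<and> src c = rng b
      \<and> deg a = p \<and> deg c = (\<lambda>j. q j - p j) \<and> cmp a (cmp c b) = w" using assms by blast
next
  fix c' assume "\<exists>a b. a \<in> L \<and> b \<in> L \<and> c' \<in> L \<and> src a = rng c' \<and> src c' = rng b
      \<and> deg a = p \<and> deg c' = (\<lambda>j. q j - p j) \<and> cmp a (cmp c' b) = w"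
  then obtain a' b' where h: "a' \<in> L" "b' \<in> L" "c' \<in> L" "src a' = rng c'" "src c' = rng b'"
      "deg a' = p" "deg c' = (\<lambda>j. q j - p j)" "cmp a' (cmp c' b') = w" by blast
  have cb: "cmp c b \<in> L" "rng (cmp c b) = rng c" "deg (cmp c b) = (\<lambda>j. deg c j + deg b j)"
    using assms cmp_in rng_cmp deg_cmp by auto
  have cb': "cmp c' b' \<in> L" "rng (cmp c' b') = rng c'" "deg (cmp c' b') = (\<lambda>j. deg c' j + deg b' j)"
    using h cmp_in rng_cmp deg_cmp by auto
  have "deg w = (\<lambda>j. deg a j + deg (cmp c b) j)" using assms cb deg_cmp by auto
  moreover have "deg w = (\<lambda>j. deg a' j + deg (cmp c' b') j)" using h cb' deg_cmp by auto
  ultimately have "deg (cmp c b) = deg (cmp c' b')"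
    using assms h by (auto simp: fun_eq_iff)
  then have "a = a' \<and> cmp c b = cmp c' b'"
    using factorisation_unique[of a "cmp c b" a' "cmp c' b'"] assms h cb cb' by auto
  moreover from this have "deg b = deg b'"
    using \<open>deg (cmp c b) = deg (cmp c' b')\<close> cb cb' assms h by (auto simp: fun_eq_iff)
  ultimately show "c' = c" using factorisation_unique[of c b c' b'] assms h by auto
qed

lemma segment_factorisation:
  assumes "w \<in> L" "p \<le> q" "q \<le> deg w"
  obtains a b where "a \<in> L" "b \<in> L" "segment w p q \<in> L" "src a = rng (segment w p q)"
    "src (segment w p q) = rng b" "deg a = p" "deg (segment w p q) = (\<lambda>j. q j - p j)"
    "deg b = (\<lambda>j. deg w j - q j)" "cmp a (cmp (segment w p q) b) = w"
proof -
  obtain a b' where h: "a \<in> L" "b' \<in> L" "src a = rng b'" "deg a = p"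
    "deg b' = (\<lambda>j. deg w j - p j)" "cmp a b' = w"
    using factorisation_exists[OF assms(1) order_trans[OF assms(2,3)]] by blast
  have "(\<lambda>j. q j - p j) \<le> deg b'" using h assms by (auto simp: le_fun_def intro: diff_le_mono)
  then obtain c b where g: "c \<in> L" "b \<in> L" "src c = rng b"
    "deg c = (\<lambda>j. q j - p j)" "deg b = (\<lambda>j. deg b' j - (q j - p j))" "cmp c b = b'"
    using factorisation_exists[OF h(2)] by blast
  have "rng c = rng b'" using rng_cmp[OF g(1-3)] g(6) by simp
  then have "segment w p q = c" using segment_eqI[of a b c p q w] h g by auto
  moreover have "deg b = (\<lambda>j. deg w j - q j)"
    using g(5) h(5) assms by (auto simp: le_fun_def fun_eq_iff)
  ultimately show ?thesis using that[of a b] h g \<open>rng c = rng b'\<close> by auto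
qed

lemma segment_in: "w \<in> L \<Longrightarrow> p \<le> q \<Longrightarrow> q \<le> deg w \<Longrightarrow> segment w p q \<in> L"
  and segment_deg: "w \<in> L \<Longrightarrow> p \<le> q \<Longrightarrow> q \<le> deg w \<Longrightarrow> deg (segment w p q) = (\<lambda>j. q j - p j)"
  by (metis segment_factorisation)+

lemma segment_full: "w \<in> L \<Longrightarrow> segment w (\<lambda>_. 0) (deg w) = w"
  by (rule segment_eqI[of "rng w" "src w"])
     (auto simp: rng_in src_in src_rng rng_src deg_rng cmp_src_right cmp_rng_left)

lemma rng_segment:
  assumes "w \<in> L" "p \<le> q" "q \<le> deg w"
  shows "rng (segment w p q) = segment w p p"
proof -
  let ?c = "segment w p q"
  obtain a b where h: "a \<in> L" "b \<in> L" "?c \<in> L" "src a = rng ?c" "src ?c = rng b"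
      "deg a = p" "cmp a (cmp ?c b) = w"
    using segment_factorisation[OF assms] by blast
  have "cmp (rng ?c) (cmp ?c b) = cmp ?c b" using h cmp_rng_left[of "cmp ?c b"] cmp_in rng_cmp by simp
  then show ?thesis
    by (intro segment_eqI[of a "cmp ?c b", symmetric])
       (use h in \<open>auto simp: rng_in cmp_in rng_cmp rng_rng deg_rng src_rng\<close>)
qed

lemma src_segment:
  assumes "w \<in> L" "p \<le> q" "q \<le> deg w"
  shows "src (segment w p q) = segment w q q"
proof -
  let ?c = "segment w p q"
  obtain a b where h: "a \<in> L" "b \<in> L" "?c \<in> L" "src a = rng ?c" "src ?c = rng b"
      "deg a = p" "deg ?c = (\<lambda>j. q j - p j)" "cmp a (cmp ?c b) = w"
    using segment_factorisation[OF assms] by blast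
  have "cmp (src ?c) b = b" using h cmp_rng_left by simp
  then have e: "cmp (cmp a ?c) (cmp (src ?c) b) = w" using h cmp_assoc by simp
  have d: "deg (cmp a ?c) = q" using h deg_cmp assms(2) by (auto simp: le_fun_def fun_eq_iff)
  show ?thesis
    by (rule segment_eqI[of "cmp a ?c" b, symmetric])
       (use h e d in \<open>auto simp: src_in cmp_in src_cmp src_src deg_src rng_rng src_rng deg_rng rng_in\<close>)
qed

lemma cmp_segment:
  assumes "w \<in> L" "p \<le> q" "q \<le> s" "s \<le> deg w"
  shows "cmp (segment w p q) (segment w q s) = segment w p s"
proof -
  let ?c = "segment w p s"
  obtain a b where h: "a \<in> L" "b \<in> L" "?c \<in> L" "src a = rng ?c" "src ?c = rng b"
      "deg a = p" "deg ?c = (\<lambda>j. s j - p j)" "cmp a (cmp ?c b) = w"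
    using segment_factorisation[OF assms(1) order_trans[OF assms(2,3)] assms(4)] by blast
  have "(\<lambda>j. q j - p j) \<le> deg ?c" using h assms by (auto simp: le_fun_def intro: diff_le_mono)
  then obtain c1 c2 where g: "c1 \<in> L" "c2 \<in> L" "src c1 = rng c2" "deg c1 = (\<lambda>j. q j - p j)"
      "deg c2 = (\<lambda>j. deg ?c j - (q j - p j))" "cmp c1 c2 = ?c"
    using factorisation_exists[OF h(3)] by blast
  have r1: "rng c1 = rng ?c" "src c2 = src ?c" using g rng_cmp src_cmp by metis+
  have e1: "cmp a (cmp c1 (cmp c2 b)) = w" using g r1 h cmp_assoc[of c1 c2 b] by simp
  have e2: "cmp (cmp a c1) (cmp c2 b) = w"
    using e1 h g r1 cmp_assoc[of a c1 "cmp c2 b"] by (simp add: cmp_in rng_cmp)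
  have c1: "segment w p q = c1"
    by (rule segment_eqI[of a "cmp c2 b"]) (use h g r1 e1 in \<open>auto simp: cmp_in rng_cmp\<close>)
  moreover have "deg (cmp a c1) = q" using h g r1 deg_cmp assms(2) by (auto simp: le_fun_def fun_eq_iff)
  moreover have "deg c2 = (\<lambda>j. s j - q j)" using g h assms by (auto simp: le_fun_def fun_eq_iff)
  ultimately have "segment w q s = c2"
    by (intro segment_eqI[of "cmp a c1" b]) (use h g r1 e2 in \<open>auto simp: cmp_in src_cmp\<close>)
  then show ?thesis using c1 g by simp
qed

lemma segment_segment:
  assumes "w \<in> L" "p \<le> q" "q \<le> t" "t \<le> deg w"
  shows "segment (segment w (\<lambda>_. 0) t) p q = segment w p q"
proof -
  define C where "C = segment w (\<lambda>_. 0) t"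
  have "(\<lambda>_. 0) \<le> t" by (simp add: le_fun_def)
  then obtain A B where h: "A \<in> L" "B \<in> L" "C \<in> L" "src A = rng C" "src C = rng B"
      "deg A = (\<lambda>_. 0)" "deg C = (\<lambda>j. t j - 0)" "cmp A (cmp C B) = w"
    using segment_factorisation[OF assms(1) _ assms(4)] unfolding C_def by blast
  define c where "c = segment C p q"
  have "q \<le> deg C" using h(7) assms(3) by simp
  then obtain a b where g: "a \<in> L" "b \<in> L" "c \<in> L" "src a = rng c" "src c = rng b" "deg a = p"
      "deg c = (\<lambda>j. q j - p j)" "cmp a (cmp c b) = C"
    using segment_factorisation[OF h(3) assms(2)] unfolding c_def by blast
  have cb: "cmp c b \<in> L" "rng (cmp c b) = rng c" "src (cmp c b) = src b"
    using g cmp_in rng_cmp src_cmp by auto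
  have "src C = src b" "rng C = rng a"
    using src_cmp[of a "cmp c b"] rng_cmp[of a "cmp c b"] g cb by auto
  then have bB: "src b = rng B" and aA: "src A = rng a" using h by auto
  have "cmp C B = cmp a (cmp c (cmp b B))"
    using g cb h bB cmp_assoc[of a "cmp c b" B] cmp_assoc[of c b B] by simp
  moreover have cbB: "cmp c (cmp b B) \<in> L" "rng (cmp c (cmp b B)) = rng c"
    using g h bB by (auto simp: cmp_in rng_cmp)
  ultimately have "w = cmp (cmp A a) (cmp c (cmp b B))"
    using h(8) g aA cmp_assoc[of A a "cmp c (cmp b B)"] h by simp
  then show ?thesis unfolding C_def[symmetric] c_def[symmetric]
    by (intro segment_eqI[of "cmp A a" "cmp b B", symmetric])
       (use h g aA bB cbB in \<open>auto simp: cmp_in rng_cmp src_cmp deg_cmp\<close>)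
qed

lemma segment_cmp_initial:
  assumes "a \<in> L" "b \<in> L" "src a = rng b" "k \<le> deg b"
  shows "segment (cmp a b) (\<lambda>_. 0) (\<lambda>j. deg a j + k j) = cmp a (segment b (\<lambda>_. 0) k)"
proof -
  define c where "c = segment b (\<lambda>_. 0) k"
  have "(\<lambda>_. 0) \<le> k" by (simp add: le_fun_def)
  then obtain b0 b1 where h: "b0 \<in> L" "b1 \<in> L" "c \<in> L" "src b0 = rng c" "src c = rng b1"
      "deg b0 = (\<lambda>_. 0)" "deg c = (\<lambda>j. k j - 0)" "cmp b0 (cmp c b1) = b"
    using segment_factorisation[OF assms(2) _ assms(4)] unfolding c_def by blast
  have cb: "cmp c b1 \<in> L" "rng (cmp c b1) = rng c" using h cmp_in rng_cmp by auto
  have "src b0 = b0" using vertex_of_deg_zero h by auto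
  then have b: "b = cmp c b1" using h cb cmp_rng_left[of "cmp c b1"] by simp
  then have ra: "src a = rng c" using assms cb by simp
  have "cmp a b = cmp (rng a) (cmp (cmp a c) b1)"
    using b h ra cmp_assoc[of a c b1] cmp_rng_left[of "cmp a (cmp c b1)"] cb assms
    by (simp add: cmp_in rng_cmp)
  then show ?thesis unfolding c_def[symmetric]
    by (intro segment_eqI[of "rng a" b1])
       (use h ra assms in \<open>auto simp: cmp_in rng_cmp src_cmp deg_cmp rng_in src_rng deg_rng rng_rng\<close>)
qed

lemma segment_cmp_final:
  assumes "a \<in> L" "b \<in> L" "src a = rng b" "p \<le> q" "q \<le> deg b"
  shows "segment (cmp a b) (\<lambda>j. deg a j + p j) (\<lambda>j. deg a j + q j) = segment b p q"
proof -
  define c where "c = segment b p q"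
  obtain b0 b1 where h: "b0 \<in> L" "b1 \<in> L" "c \<in> L" "src b0 = rng c" "src c = rng b1"
      "deg b0 = p" "deg c = (\<lambda>j. q j - p j)" "cmp b0 (cmp c b1) = b"
    using segment_factorisation[OF assms(2,4,5)] unfolding c_def by blast
  have cb: "cmp c b1 \<in> L" "rng (cmp c b1) = rng c" using h cmp_in rng_cmp by auto
  have rb: "rng b = rng b0" using h cb rng_cmp by metis
  have "cmp a b = cmp (cmp a b0) (cmp c b1)"
    using h cb rb assms cmp_assoc[of a b0 "cmp c b1"] by simp
  then show ?thesis unfolding c_def[symmetric]
    by (intro segment_eqI[of "cmp a b0" b1]) (use h rb assms in \<open>auto simp: cmp_in src_cmp deg_cmp\<close>)
qed

section \<open>Paths\<close>

abbreviation "is_kpath \<equiv> is_path L src rng cmp deg"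
abbreviation "W \<equiv> WL L src rng cmp deg"
abbreviation "Z \<equiv> cylZ L src rng cmp deg"

lemma path_in: "is_kpath n x \<Longrightarrow> p \<le> q \<Longrightarrow> le_edeg q n \<Longrightarrow> x (p, q) \<in> L"
  and path_deg: "is_kpath n x \<Longrightarrow> p \<le> q \<Longrightarrow> le_edeg q n \<Longrightarrow> deg (x (p, q)) = (\<lambda>j. q j - p j)"
  and path_rng: "is_kpath n x \<Longrightarrow> p \<le> q \<Longrightarrow> le_edeg q n \<Longrightarrow> rng (x (p, q)) = x (p, p)"
  and path_src: "is_kpath n x \<Longrightarrow> p \<le> q \<Longrightarrow> le_edeg q n \<Longrightarrow> src (x (p, q)) = x (q, q)"
  and path_vertex: "is_kpath n x \<Longrightarrow> le_edeg p n \<Longrightarrow> src (x (p, p)) = x (p, p)"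
  and path_cmp: "is_kpath n x \<Longrightarrow> p \<le> q \<Longrightarrow> q \<le> t \<Longrightarrow> le_edeg t n \<Longrightarrow>
    cmp (x (p, q)) (x (q, t)) = x (p, t)"
  and path_undefined: "is_kpath n x \<Longrightarrow> \<not> (p \<le> q \<and> le_edeg q n) \<Longrightarrow> x (p, q) = undefined"
  unfolding is_path_def by meson+

lemma segment_path:
  assumes "is_kpath n x" "p \<le> q" "q \<le> t" "le_edeg t n"
  shows "segment (x ((\<lambda>_. 0), t)) p q = x (p, q)"
proof -
  have z: "(\<lambda>_. 0) \<le> p" by (simp add: le_fun_def)
  have pt: "p \<le> t" using assms order_trans by blast
  have "le_edeg q n" "le_edeg p n" using le_edeg_trans assms pt by blast+
  moreover have "x ((\<lambda>_. 0), t) = cmp (x ((\<lambda>_. 0), p)) (cmp (x (p, q)) (x (q, t)))"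
    using path_cmp[OF assms(1) z pt assms(4)] path_cmp[OF assms] by simp
  ultimately show ?thesis
    by (intro segment_eqI[of "x ((\<lambda>_. 0), p)" "x (q, t)"])
       (use assms z pt in \<open>auto simp: path_in path_src path_rng path_deg\<close>)
qed

lemma mem_W_iff: "y \<in> W \<longleftrightarrow> is_kpath (fst y) (snd y)"
  unfolding WL_def by (cases y) auto

lemma mem_Z_iff: "y \<in> Z l \<longleftrightarrow> y \<in> W \<and> le_edeg (deg l) (fst y) \<and> snd y ((\<lambda>_. 0), deg l) = l"
  unfolding cylZ_def by auto

lemma mem_Z_base:
  assumes "x \<in> W"
  shows "x \<in> Z (snd x ((\<lambda>_. 0), (\<lambda>_. 0)))" "snd x ((\<lambda>_. 0), (\<lambda>_. 0)) \<in> vertices L src"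
proof -
  have "is_kpath (fst x) (snd x)" using assms mem_W_iff by auto
  then have "snd x ((\<lambda>_. 0), (\<lambda>_. 0)) \<in> L" "deg (snd x ((\<lambda>_. 0), (\<lambda>_. 0))) = (\<lambda>_. 0)"
    "src (snd x ((\<lambda>_. 0), (\<lambda>_. 0))) = snd x ((\<lambda>_. 0), (\<lambda>_. 0))"
    using path_in path_deg path_vertex by auto
  then show "x \<in> Z (snd x ((\<lambda>_. 0), (\<lambda>_. 0)))" "snd x ((\<lambda>_. 0), (\<lambda>_. 0)) \<in> vertices L src"
    using assms mem_Z_iff unfolding vertices_def by auto
qed

lemma Z_disjoint: "deg a = deg b \<Longrightarrow> a \<noteq> b \<Longrightarrow> Z a \<inter> Z b = {}"
  unfolding cylZ_def by auto

lemma fst_shift: "fst (shift m y) = (\<lambda>j. fst y j - enat (m j))"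
  unfolding shift_def by (simp add: Let_def)

lemma snd_shift: "snd (shift m y) (p, q) =
   (if p \<le> q \<and> le_edeg q (\<lambda>j. fst y j - enat (m j))
    then snd y ((\<lambda>j. p j + m j), (\<lambda>j. q j + m j)) else undefined)"
  unfolding shift_def by (simp add: Let_def)

lemma shift_in_W:
  assumes "y \<in> W" and mn: "le_edeg m (fst y)"
  shows "shift m y \<in> W"
proof -
  let ?n = "fst y" and ?x = "snd y" and ?n' = "\<lambda>j. fst y j - enat (m j)" and ?x' = "snd (shift m y)"
  let ?t = "\<lambda>q j. q j + m j"
  have px: "is_kpath ?n ?x" using assms mem_W_iff by auto
  have x': "?x' (p, q) = (if p \<le> q \<and> le_edeg (?t q) ?n then ?x (?t p, ?t q) else undefined)" for p q
    using snd_shift[of m y] le_edeg_shift_iff[OF mn] by simp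
  have mono: "p \<le> q \<Longrightarrow> ?t p \<le> ?t q" for p q by (auto simp: le_fun_def)
  have "is_kpath ?n' ?x'"
    unfolding is_path_def
  proof (intro conjI; intro allI impI)
    fix p q assume "p \<le> q \<and> le_edeg q ?n'"
    then have pq: "?t p \<le> ?t q" "le_edeg (?t q) ?n" "le_edeg (?t p) ?n"
      using mono le_edeg_shift_iff[OF mn] le_edeg_trans by blast+
    then show "?x' (p, q) \<in> L \<and> deg (?x' (p, q)) = (\<lambda>j. q j - p j) \<and> rng (?x' (p, q)) = ?x' (p, p)
        \<and> src (?x' (p, q)) = ?x' (q, q)"
      using \<open>p \<le> q \<and> _\<close> x' path_in[OF px pq(1,2)] path_deg[OF px pq(1,2)]
        path_rng[OF px pq(1,2)] path_src[OF px pq(1,2)] by auto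
  next
    fix p assume "le_edeg p ?n'"
    then show "src (?x' (p, p)) = ?x' (p, p)" using x' path_vertex[OF px] le_edeg_shift_iff[OF mn] by auto
  next
    fix p q t assume a: "p \<le> q \<and> q \<le> t \<and> le_edeg t ?n'"
    then have "le_edeg (?t t) ?n" using le_edeg_shift_iff[OF mn] by auto
    moreover from this have "le_edeg (?t q) ?n" "le_edeg (?t p) ?n"
      using a mono le_edeg_trans order_trans by metis+
    ultimately show "cmp (?x' (p, q)) (?x' (q, t)) = ?x' (p, t)"
      using a x' path_cmp[OF px mono mono] order_trans by auto
  next
    fix p q assume "\<not> (p \<le> q \<and> le_edeg q ?n')"
    then show "?x' (p, q) = undefined" using x' le_edeg_shift_iff[OF mn] by auto
  qed
  then show ?thesis using mem_W_iff by (simp add: fst_shift)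
qed

lemma shift_zero: assumes "y \<in> W" shows "shift (\<lambda>_. 0) y = y"
proof -
  have px: "is_kpath (fst y) (snd y)" using assms mem_W_iff by auto
  have "fst (shift (\<lambda>_. 0) y) = fst y" by (simp add: fst_shift zero_enat_def[symmetric])
  moreover have "snd (shift (\<lambda>_. 0) y) = snd y"
  proof
    fix pq show "snd (shift (\<lambda>_. 0) y) pq = snd y pq"
      using snd_shift[of "\<lambda>_. 0" y "fst pq" "snd pq"] path_undefined[OF px, of "fst pq" "snd pq"]
      by (cases pq) (auto simp: zero_enat_def[symmetric])
  qed
  ultimately show ?thesis by (metis prod.collapse)
qed

definition prepend_deg :: "'m \<Rightarrow> ('k, 'm) kpath \<Rightarrow> ('k \<Rightarrow> enat)" where
  "prepend_deg l y = (\<lambda>j. enat (deg l j) + fst y j)"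

text \<open>The segment \<open>(p, q)\<close> of the path \<open>l y\<close> is cut out of the morphism \<open>l y(0, t - d(l))\<close> for
  any \<open>t \<ge> q, d(l)\<close>; the definition picks \<open>t = max q d(l)\<close>.\<close>
definition prepend :: "'m \<Rightarrow> ('k, 'm) kpath \<Rightarrow> ('k, 'm) kpath" where
  "prepend l y = (prepend_deg l y, \<lambda>(p, q). if p \<le> q \<and> le_edeg q (prepend_deg l y)
      then segment (cmp l (snd y ((\<lambda>_. 0), (\<lambda>j. max (q j) (deg l j) - deg l j)))) p q
      else undefined)"

lemma prepend_initial:
  assumes l: "l \<in> L" and y: "y \<in> W" and s: "snd y ((\<lambda>_. 0), (\<lambda>_. 0)) = src l"
    and t: "deg l \<le> t" "le_edeg t (prepend_deg l y)"
  shows "le_edeg (\<lambda>j. t j - deg l j) (fst y)"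
    "cmp l (snd y ((\<lambda>_. 0), (\<lambda>j. t j - deg l j))) \<in> L"
    "deg (cmp l (snd y ((\<lambda>_. 0), (\<lambda>j. t j - deg l j)))) = t"
proof -
  have py: "is_kpath (fst y) (snd y)" using y mem_W_iff by auto
  show le: "le_edeg (\<lambda>j. t j - deg l j) (fst y)"
    using t unfolding le_edeg_def prepend_deg_def le_fun_def by (auto intro: enat_le_add_minus)
  have z: "(\<lambda>_. 0) \<le> (\<lambda>j. t j - deg l j)" by (simp add: le_fun_def)
  let ?v = "snd y ((\<lambda>_. 0), (\<lambda>j. t j - deg l j))"
  have v: "?v \<in> L" "rng ?v = src l" "deg ?v = (\<lambda>j. t j - deg l j)"
    using path_in[OF py z le] path_rng[OF py z le] path_deg[OF py z le] s by auto
  then show "cmp l ?v \<in> L" "deg (cmp l ?v) = t"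
    using l cmp_in deg_cmp t(1) by (auto simp: le_fun_def fun_eq_iff)
qed

lemma snd_prepend:
  assumes l: "l \<in> L" and y: "y \<in> W" and s: "snd y ((\<lambda>_. 0), (\<lambda>_. 0)) = src l"
    and pq: "p \<le> q" "q \<le> t" and t: "deg l \<le> t" "le_edeg t (prepend_deg l y)"
  shows "snd (prepend l y) (p, q) = segment (cmp l (snd y ((\<lambda>_. 0), (\<lambda>j. t j - deg l j)))) p q"
proof -
  have py: "is_kpath (fst y) (snd y)" using y mem_W_iff by auto
  define tq where "tq = (\<lambda>j. max (q j) (deg l j))"
  have tq: "tq \<le> t" "q \<le> tq" "deg l \<le> tq" using pq t unfolding tq_def le_fun_def by auto
  have "le_edeg q (prepend_deg l y)" using le_edeg_trans tq t pq by blast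
  then have c: "snd (prepend l y) (p, q) = segment (cmp l (snd y ((\<lambda>_. 0), (\<lambda>j. tq j - deg l j)))) p q"
    unfolding prepend_def tq_def using pq by simp
  let ?v = "snd y ((\<lambda>_. 0), (\<lambda>j. t j - deg l j))"
  have le: "le_edeg (\<lambda>j. t j - deg l j) (fst y)" and w: "cmp l ?v \<in> L" "deg (cmp l ?v) = t"
    using prepend_initial[OF l y s t] by auto
  have z: "(\<lambda>_. 0) \<le> (\<lambda>j. tq j - deg l j)" by (simp add: le_fun_def)
  have tqt: "(\<lambda>j. tq j - deg l j) \<le> (\<lambda>j. t j - deg l j)"
    using tq(1) by (auto simp: le_fun_def intro: diff_le_mono)
  have v: "?v \<in> L" "rng ?v = src l" "deg ?v = (\<lambda>j. t j - deg l j)"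
    using path_in[OF py _ le] path_rng[OF py _ le] path_deg[OF py _ le] s by (auto simp: le_fun_def)
  have "segment (cmp l ?v) (\<lambda>_. 0) tq = cmp l (segment ?v (\<lambda>_. 0) (\<lambda>j. tq j - deg l j))"
    using segment_cmp_initial[OF l v(1) _, of "\<lambda>j. tq j - deg l j"] v tq(3) tqt
    by (simp add: le_fun_def)
  also have "segment ?v (\<lambda>_. 0) (\<lambda>j. tq j - deg l j) = snd y ((\<lambda>_. 0), (\<lambda>j. tq j - deg l j))"
    using segment_path[OF py z tqt le] .
  finally have "segment (cmp l ?v) (\<lambda>_. 0) tq = cmp l (snd y ((\<lambda>_. 0), (\<lambda>j. tq j - deg l j)))" .
  moreover have "segment (segment (cmp l ?v) (\<lambda>_. 0) tq) p q = segment (cmp l ?v) p q"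
    using segment_segment[OF w(1) pq(1) tq(2)] tq w by simp
  ultimately show ?thesis using c by simp
qed

lemma prepend_in_W:
  assumes l: "l \<in> L" and y: "y \<in> W" and s: "snd y ((\<lambda>_. 0), (\<lambda>_. 0)) = src l"
  shows "prepend l y \<in> W"
proof -
  let ?n = "prepend_deg l y" and ?x = "snd (prepend l y)"
  let ?w = "\<lambda>t. cmp l (snd y ((\<lambda>_. 0), (\<lambda>j. t j - deg l j)))"
  define T where "T q = (\<lambda>j. max (q j) (deg l j))" for q :: "'k \<Rightarrow> nat"
  have T: "q \<le> T q" "deg l \<le> T q" for q by (auto simp: T_def le_fun_def)
  have TL: "le_edeg (T q) ?n" if "le_edeg q ?n" for q
    using that unfolding T_def le_edeg_def prepend_deg_def by (auto simp: max_def)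
  have w: "?w (T t) \<in> L" "deg (?w (T t)) = T t" if "le_edeg t ?n" for t
    using prepend_initial[OF l y s T(2) TL[OF that]] by auto
  have x: "?x (p, q) = segment (?w (T t)) p q" if "p \<le> q" "q \<le> t" "le_edeg t ?n" for p q t
    using snd_prepend[OF l y s that(1) order_trans[OF that(2) T(1)] T(2) TL[OF that(3)]] .
  have "is_kpath ?n ?x"
    unfolding is_path_def
  proof (intro conjI; intro allI impI)
    fix p q assume a: "p \<le> q \<and> le_edeg q ?n"
    then have "q \<le> deg (?w (T q))" using w T by simp
    then show "?x (p, q) \<in> L \<and> deg (?x (p, q)) = (\<lambda>j. q j - p j) \<and> rng (?x (p, q)) = ?x (p, p)
        \<and> src (?x (p, q)) = ?x (q, q)"
      using a x[of p q q] x[of p p q] x[of q q q] w[of q] segment_in segment_deg rng_segment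
        src_segment by auto
  next
    fix p assume "le_edeg p ?n"
    then show "src (?x (p, p)) = ?x (p, p)"
      using x[of p p p] w[of p] src_segment[of _ p p] T by simp
  next
    fix p q t assume a: "p \<le> q \<and> q \<le> t \<and> le_edeg t ?n"
    then have "p \<le> t" "t \<le> deg (?w (T t))" using w T order_trans by auto
    then show "cmp (?x (p, q)) (?x (q, t)) = ?x (p, t)"
      using a x[of p q t] x[of q t t] x[of p t t] cmp_segment[OF w(1)] by auto
  next
    fix p q assume "\<not> (p \<le> q \<and> le_edeg q ?n)"
    then show "?x (p, q) = undefined" unfolding prepend_def by auto
  qed
  then show ?thesis using mem_W_iff by (simp add: prepend_def)
qed

lemma prepend_in_Z:
  assumes l: "l \<in> L" and y: "y \<in> W" and s: "snd y ((\<lambda>_. 0), (\<lambda>_. 0)) = src l"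
  shows "prepend l y \<in> Z l"
proof -
  have t: "le_edeg (deg l) (prepend_deg l y)"
    unfolding le_edeg_def prepend_deg_def by (simp add: le_iff_add)
  have "snd (prepend l y) ((\<lambda>_. 0), deg l) = segment (cmp l (snd y ((\<lambda>_. 0), (\<lambda>_. 0)))) (\<lambda>_. 0) (deg l)"
    using snd_prepend[OF l y s _ order_refl order_refl t] by (simp add: le_fun_def)
  also have "\<dots> = l" using s l by (simp add: cmp_src_right segment_full)
  finally show ?thesis using mem_Z_iff prepend_in_W[OF l y s] t by (simp add: prepend_def)
qed

lemma shift_prepend:
  assumes l: "l \<in> L" and y: "y \<in> W" and s: "snd y ((\<lambda>_. 0), (\<lambda>_. 0)) = src l"
  shows "shift (deg l) (prepend l y) = y"
proof -
  have py: "is_kpath (fst y) (snd y)" using y mem_W_iff by auto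
  have f: "fst (shift (deg l) (prepend l y)) = fst y"
    by (simp add: fst_shift prepend_def prepend_deg_def)
  have "snd (shift (deg l) (prepend l y)) (p, q) = snd y (p, q)" for p q
  proof (cases "p \<le> q \<and> le_edeg q (fst y)")
    case True
    let ?t = "\<lambda>j. q j + deg l j"
    have lt: "le_edeg ?t (prepend_deg l y)"
      using True unfolding le_edeg_def prepend_deg_def by (auto intro: enat_add_le_add)
    have dl: "deg l \<le> ?t" "(\<lambda>j. p j + deg l j) \<le> ?t" using True by (auto simp: le_fun_def)
    let ?v = "snd y ((\<lambda>_. 0), q)"
    have v: "?v \<in> L" "rng ?v = src l" "deg ?v = q"
      using path_in[OF py _ True[THEN conjunct2]] path_rng[OF py _ True[THEN conjunct2]]
        path_deg[OF py _ True[THEN conjunct2]] s by (auto simp: le_fun_def)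
    have "snd (shift (deg l) (prepend l y)) (p, q) = snd (prepend l y) ((\<lambda>j. p j + deg l j), ?t)"
      using snd_shift[of "deg l" "prepend l y" p q] f[unfolded fst_shift] True by simp
    also have "\<dots> = segment (cmp l ?v) (\<lambda>j. deg l j + p j) (\<lambda>j. deg l j + q j)"
      using snd_prepend[OF l y s dl(2) order_refl dl(1) lt] by (simp add: add.commute)
    also have "\<dots> = segment ?v p q" using segment_cmp_final[OF l v(1)] v True by simp
    also have "\<dots> = snd y (p, q)" using segment_path[OF py _ order_refl] True by simp
    finally show ?thesis .
  next
    case False
    then show ?thesis
      using snd_shift[of "deg l" "prepend l y" p q] f[unfolded fst_shift] path_undefined[OF py False]
      by auto
  qed
  then show ?thesis using f by (metis prod.collapse ext surj_pair)
qed

lemma prepend_shift: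
  assumes l: "l \<in> L" and x: "x \<in> Z l"
  shows "prepend l (shift (deg l) x) = x"
proof -
  have px: "is_kpath (fst x) (snd x)" and ld: "le_edeg (deg l) (fst x)"
    and x0: "snd x ((\<lambda>_. 0), deg l) = l"
    using x mem_Z_iff mem_W_iff by auto
  let ?y = "shift (deg l) x"
  have fy: "fst ?y = (\<lambda>j. fst x j - enat (deg l j))" by (simp add: fst_shift)
  have d: "prepend_deg l ?y = fst x"
    using ld unfolding le_edeg_def by (simp add: prepend_deg_def fy enat_add_minus_cancel)
  have "snd (prepend l ?y) (p, q) = snd x (p, q)" for p q
  proof (cases "p \<le> q \<and> le_edeg q (fst x)")
    case True
    define t where "t = (\<lambda>j. max (q j) (deg l j))"
    have t: "q \<le> t" "deg l \<le> t" by (auto simp: t_def le_fun_def)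
    have lt: "le_edeg t (fst x)" using True ld unfolding t_def le_edeg_def by (auto simp: max_def)
    have k: "le_edeg (\<lambda>j. t j - deg l j) (fst ?y)"
      using le_edeg_shift_iff[OF ld] lt t unfolding fy by (simp add: le_fun_def)
    have "snd (prepend l ?y) (p, q) = segment (cmp l (snd ?y ((\<lambda>_. 0), (\<lambda>j. t j - deg l j)))) p q"
      using True unfolding prepend_def d t_def by simp
    also have "snd ?y ((\<lambda>_. 0), (\<lambda>j. t j - deg l j)) = snd x (deg l, t)"
      using snd_shift[of "deg l" x "\<lambda>_. 0" "\<lambda>j. t j - deg l j"] k t fy
      by (simp add: le_fun_def fun_eq_iff)
    also have "cmp l (snd x (deg l, t)) = snd x ((\<lambda>_. 0), t)"
      using path_cmp[OF px _ t(2) lt, of "\<lambda>_. 0"] x0 by (simp add: le_fun_def)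
    also have "segment (snd x ((\<lambda>_. 0), t)) p q = snd x (p, q)"
      using segment_path[OF px _ t(1) lt] True by simp
    finally show ?thesis .
  next
    case False
    then show ?thesis using path_undefined[OF px False] unfolding prepend_def d by auto
  qed
  moreover have "fst (prepend l ?y) = fst x" using d by (simp add: prepend_def)
  ultimately show ?thesis by (metis prod.collapse ext surj_pair)
qed

lemma shift_in_Z_src:
  assumes l: "l \<in> L" and x: "x \<in> Z l"
  shows "shift (deg l) x \<in> Z (src l)" "snd (shift (deg l) x) ((\<lambda>_. 0), (\<lambda>_. 0)) = src l"
proof -
  have xW: "x \<in> W" and px: "is_kpath (fst x) (snd x)" and ld: "le_edeg (deg l) (fst x)"
    and x0: "snd x ((\<lambda>_. 0), deg l) = l"
    using x mem_Z_iff mem_W_iff by auto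
  have "snd (shift (deg l) x) ((\<lambda>_. 0), (\<lambda>_. 0)) = snd x (deg l, deg l)"
    using snd_shift[of "deg l" x "\<lambda>_. 0" "\<lambda>_. 0"] by simp
  also have "\<dots> = src l" using path_src[OF px _ ld, of "\<lambda>_. 0"] x0 by (simp add: le_fun_def)
  finally show s: "snd (shift (deg l) x) ((\<lambda>_. 0), (\<lambda>_. 0)) = src l" .
  show "shift (deg l) x \<in> Z (src l)"
    using shift_in_W[OF xW ld] s mem_Z_iff deg_src[OF l] by simp
qed

definition vLambda :: "'m \<Rightarrow> ('k \<Rightarrow> nat) \<Rightarrow> 'm set" where
  "vLambda v n = {b \<in> L. rng b = v \<and> deg b = n}"

lemma Z_deg_ge_eq_UN:
  assumes a: "a \<in> L"
  shows "Z a \<inter> {x. le_edeg (\<lambda>j. deg a j + n j) (fst x)} = (\<Union>b\<in>vLambda (src a) n. Z (cmp a b))"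
proof -
  let ?t = "\<lambda>j. deg a j + n j"
  have at: "deg a \<le> ?t" and z: "(\<lambda>_. 0) \<le> deg a" by (simp_all add: le_fun_def)
  show ?thesis
  proof (intro equalityI subsetI)
    fix x assume "x \<in> Z a \<inter> {x. le_edeg ?t (fst x)}"
    then have xW: "x \<in> W" and px: "is_kpath (fst x) (snd x)" and ld: "le_edeg (deg a) (fst x)"
      and x0: "snd x ((\<lambda>_. 0), deg a) = a" and lt: "le_edeg ?t (fst x)"
      using mem_Z_iff mem_W_iff by auto
    let ?b = "snd x (deg a, ?t)"
    have b: "?b \<in> vLambda (src a) n"
      using path_in[OF px at lt] path_deg[OF px at lt] path_rng[OF px at lt] path_src[OF px z ld] x0
      unfolding vLambda_def by auto
    have "cmp a ?b = snd x ((\<lambda>_. 0), ?t)" using path_cmp[OF px z at lt] x0 by simp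
    moreover have "deg (cmp a ?b) = ?t" using a b deg_cmp unfolding vLambda_def by simp
    ultimately have "x \<in> Z (cmp a ?b)" using mem_Z_iff xW lt by simp
    with b show "x \<in> (\<Union>b\<in>vLambda (src a) n. Z (cmp a b))" by blast
  next
    fix x assume "x \<in> (\<Union>b\<in>vLambda (src a) n. Z (cmp a b))"
    then obtain b where b: "b \<in> L" "rng b = src a" "deg b = n" and xz: "x \<in> Z (cmp a b)"
      unfolding vLambda_def by auto
    have "deg (cmp a b) = ?t" using a b deg_cmp by simp
    then have xW: "x \<in> W" and px: "is_kpath (fst x) (snd x)" and lt: "le_edeg ?t (fst x)"
      and x0: "snd x ((\<lambda>_. 0), ?t) = cmp a b"
      using xz mem_Z_iff mem_W_iff by auto
    have ld: "le_edeg (deg a) (fst x)" using le_edeg_trans[OF at lt] .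
    have "cmp (snd x ((\<lambda>_. 0), deg a)) (snd x (deg a, ?t)) = cmp a b"
      using path_cmp[OF px z at lt] x0 by simp
    then have "snd x ((\<lambda>_. 0), deg a) = a"
      using factorisation_unique[OF path_in[OF px z ld] path_in[OF px at lt] a b(1)] b a
        path_src[OF px z ld] path_rng[OF px at lt] path_deg[OF px z ld] path_deg[OF px at lt]
      by simp
    then show "x \<in> Z a \<inter> {x. le_edeg ?t (fst x)}" using mem_Z_iff xW ld lt by simp
  qed
qed

lemma disjoint_family_Z_cmp:
  assumes a: "a \<in> L"
  shows "disjoint_family_on (\<lambda>b. Z (cmp a b)) (vLambda (src a) n)"
  unfolding disjoint_family_on_def
proof (intro ballI impI)
  fix b b' assume b: "b \<in> vLambda (src a) n" "b' \<in> vLambda (src a) n" "b \<noteq> b'"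
  then have "cmp a b \<noteq> cmp a b'"
    using factorisation_unique[OF a _ a] unfolding vLambda_def by auto
  moreover have "deg (cmp a b) = deg (cmp a b')" using a b deg_cmp unfolding vLambda_def by auto
  ultimately show "Z (cmp a b) \<inter> Z (cmp a b') = {}" using Z_disjoint by blast
qed

lemma W_eq_UN_vertices: "W = (\<Union>v\<in>vertices L src. Z v)"
  using mem_Z_base unfolding cylZ_def by blast

end

lemma sum_group_by_distinct_list:
  assumes "finite B" "g ` B \<subseteq> set vs" "distinct vs"
  shows "(\<Sum>x\<in>B. f (g x)) = (\<Sum>b<length vs. of_nat (card {x\<in>B. g x = vs ! b}) * (f (vs ! b) :: 'a :: comm_semiring_1))"
proof -
  have "(\<Sum>x\<in>B. f (g x)) = (\<Sum>w\<in>set vs. \<Sum>x\<in>{x\<in>B. g x = w}. f (g x))"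
    using sum.group[OF assms(1) finite_set assms(2), of "\<lambda>x. f (g x)"] by simp
  also have "\<dots> = (\<Sum>w\<in>set vs. of_nat (card {x\<in>B. g x = w}) * f w)"
    by (rule sum.cong) auto
  also have "\<dots> = (\<Sum>b<length vs. of_nat (card {x\<in>B. g x = vs ! b}) * f (vs ! b))"
    using sum.reindex_bij_betw[OF bij_betw_nth[OF assms(3) refl refl],
        of "\<lambda>w. of_nat (card {x\<in>B. g x = w}) * f w"]
    by (simp add: lessThan_atLeast0)
  finally show ?thesis .
qed

lemma vertex_matrix_carrier:
  "vertex_matrix L src rng deg i \<in> carrier_mat (length (vlist L src)) (length (vlist L src))"
  unfolding vertex_matrix_def Let_def by simp

lemma vertex_matrix_index:
  "a < length (vlist L src) \<Longrightarrow> b < length (vlist L src) \<Longrightarrow>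
   (vertex_matrix L src rng deg i :: 'a :: semiring_1 mat) $$ (a, b) =
   of_nat (card {l\<in>L. rng l = vlist L src ! a \<and> deg l = unit_deg i \<and> src l = vlist L src ! b})"
  unfolding vertex_matrix_def Let_def by simp

lemma vertex_matrix_complex:
  "(vertex_matrix L src rng deg i :: complex mat) = map_mat complex_of_real (vertex_matrix L src rng deg i)"
  by (rule eq_matI) (auto simp: vertex_matrix_index vertex_matrix_carrier[THEN carrier_matD(1)]
      vertex_matrix_carrier[THEN carrier_matD(2)])

section \<open>Quasi-invariant measures\<close>

locale qi_measure = k_graph L src rng cmp deg
  for L :: "'m set" and src rng :: "'m \<Rightarrow> 'm" and cmp :: "'m \<Rightarrow> 'm \<Rightarrow> 'm"
    and deg :: "'m \<Rightarrow> ('k::finite \<Rightarrow> nat)" +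
  fixes r :: "'k \<Rightarrow> real" and \<mu> :: "('k, 'm) kpath measure"
  assumes finite: "finite_kgraph L deg"
    and borel: "borel_measure_on_W L src rng cmp deg \<mu>"
    and prob: "prob_space \<mu>"
    and quasi_invariant: "quasi_invariant L src rng cmp deg (dot_cocycle r) \<mu>"
begin

lemma space_\<mu>: "space \<mu> = W"
  and sets_\<mu>: "sets \<mu> = sigma_sets W {U. openin (topW L src rng cmp deg) U}"
  using borel unfolding borel_measure_on_W_def by auto

lemma finite_measure_\<mu>: "finite_measure \<mu>"
  using prob prob_space_def by blast

lemma emeasure_finite: "emeasure \<mu> A \<noteq> \<infinity>"
  using finite_measure.emeasure_finite[OF finite_measure_\<mu>] by simp

lemma Z_sets: "l \<in> L \<Longrightarrow> Z l \<in> sets \<mu>"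
proof -
  assume "l \<in> L"
  moreover have "Z l = Z l - (\<Union>a\<in>{}. Z (cmp l a))" by simp
  ultimately have "Z l \<in> basisW L src rng cmp deg" unfolding basisW_def by blast
  then have "openin (topW L src rng cmp deg) (Z l)"
    unfolding topW_def openin_topology_generated_by_iff by (rule generate_topology_on.Basis)
  then show ?thesis unfolding sets_\<mu> by (auto intro: sigma_sets.Basic)
qed

lemma finite_vLambda: "finite (vLambda v n)"
proof (rule finite_subset)
  show "finite {l \<in> L. deg l = n}" using finite unfolding finite_kgraph_def by blast
qed (auto simp: vLambda_def)

lemma vLambda_subset: "vLambda v n \<subseteq> L"
  unfolding vLambda_def by auto

lemma Z_deg_ge_sets:
  assumes "a \<in> L"
  shows "Z a \<inter> {x. le_edeg (\<lambda>j. deg a j + n j) (fst x)} \<in> sets \<mu>"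
  unfolding Z_deg_ge_eq_UN[OF assms]
  by (rule sets.finite_UN[OF finite_vLambda]) (use Z_sets assms cmp_in in \<open>auto simp: vLambda_def\<close>)

definition cyl_bisection :: "'m \<Rightarrow> ('k, 'm) garrow set" where
  "cyl_bisection l = Zstar L src rng cmp deg l (src l)"

lemma cyl_bisection_eq:
  assumes l: "l \<in> L"
  shows "cyl_bisection l = (\<lambda>x. (x, (\<lambda>j. int (deg l j)), shift (deg l) x)) ` Z l"
proof (intro equalityI subsetI)
  fix g assume "g \<in> cyl_bisection l"
  then obtain x h y where g: "g = (x, h, y)" "x \<in> Z l" "y \<in> Z (src l)"
    "shift (deg l) x = shift (deg (src l)) y" "h = (\<lambda>j. int (deg l j) - int (deg (src l) j))"
    unfolding cyl_bisection_def Zstar_def by auto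
  then have "shift (deg l) x = y" "h = (\<lambda>j. int (deg l j))"
    using shift_zero mem_Z_iff deg_src[OF l] by auto
  then show "g \<in> (\<lambda>x. (x, (\<lambda>j. int (deg l j)), shift (deg l) x)) ` Z l" using g by auto
next
  fix g assume "g \<in> (\<lambda>x. (x, (\<lambda>j. int (deg l j)), shift (deg l) x)) ` Z l"
  then obtain x where g: "g = (x, (\<lambda>j. int (deg l j)), shift (deg l) x)" "x \<in> Z l" by auto
  have "shift (deg l) x \<in> Z (src l)" using shift_in_Z_src[OF l g(2)] by simp
  then show "g \<in> cyl_bisection l"
    unfolding cyl_bisection_def Zstar_def using g shift_zero mem_Z_iff deg_src[OF l] by auto
qed

lemma g_range_cyl_bisection: "l \<in> L \<Longrightarrow> g_range ` cyl_bisection l = Z l"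
  unfolding cyl_bisection_eq g_range_def by (auto simp: image_iff)

lemma g_source_cyl_bisection:
  assumes l: "l \<in> L"
  shows "g_source ` cyl_bisection l = Z (src l)"
proof (intro equalityI subsetI)
  fix y assume "y \<in> g_source ` cyl_bisection l"
  then show "y \<in> Z (src l)" unfolding cyl_bisection_eq[OF l] g_source_def using shift_in_Z_src[OF l] by auto
next
  fix y assume "y \<in> Z (src l)"
  then have yW: "y \<in> W" and y0: "snd y ((\<lambda>_. 0), (\<lambda>_. 0)) = src l" using mem_Z_iff deg_src[OF l] by auto
  have "prepend l y \<in> Z l" "shift (deg l) (prepend l y) = y"
    using prepend_in_Z[OF l yW y0] shift_prepend[OF l yW y0] by auto
  then show "y \<in> g_source ` cyl_bisection l"
    unfolding cyl_bisection_eq[OF l] g_source_def image_image by force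
qed

lemma open_bisection_cyl_bisection:
  assumes l: "l \<in> L"
  shows "open_bisection L src rng cmp deg (cyl_bisection l)"
  unfolding open_bisection_def
proof (intro conjI)
  have "cyl_bisection l = {(x, g, y) \<in> Zstar L src rng cmp deg l (src l).
      x \<notin> (\<Union>a\<in>{}. cylZ L src rng cmp deg (cmp l a))}"
    unfolding cyl_bisection_def by auto
  then have "\<exists>l' e G. cyl_bisection l = {(x, g, y) \<in> Zstar L src rng cmp deg l' e.
      x \<notin> (\<Union>a\<in>G. cylZ L src rng cmp deg (cmp l' a))}
      \<and> l' \<in> L \<and> e \<in> L \<and> src l' = src e \<and> finite G \<and> G \<subseteq> {a\<in>L. rng a = src l'}"
    using l src_in[OF l] src_src[OF l] by (intro exI[of _ l] exI[of _ "src l"] exI[of _ "{}"]) simp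
  then have "cyl_bisection l \<in> basisG L src rng cmp deg"
    by (simp only: basisG_def mem_Collect_eq)
  then show "openin (topG L src rng cmp deg) (cyl_bisection l)"
    unfolding topG_def openin_topology_generated_by_iff by (rule generate_topology_on.Basis)
  show "inj_on g_range (cyl_bisection l)"
    unfolding cyl_bisection_eq[OF l] g_range_def by (auto simp: inj_on_def)
  show "inj_on g_source (cyl_bisection l)"
  proof (rule inj_onI)
    fix g g' assume "g \<in> cyl_bisection l" "g' \<in> cyl_bisection l" "g_source g = g_source g'"
    then obtain x x' where "g = (x, (\<lambda>j. int (deg l j)), shift (deg l) x)" "x \<in> Z l"
      "g' = (x', (\<lambda>j. int (deg l j)), shift (deg l) x')" "x' \<in> Z l"
      "shift (deg l) x = shift (deg l) x'"
      unfolding cyl_bisection_eq[OF l] g_source_def by auto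
    then show "g = g'" using prepend_shift[OF l] by metis
  qed
qed

definition rdeg :: "'m \<Rightarrow> real" where
  "rdeg l = (\<Sum>j\<in>UNIV. r j * real (deg l j))"

lemma rdeg_cmp: "a \<in> L \<Longrightarrow> b \<in> L \<Longrightarrow> src a = rng b \<Longrightarrow> rdeg (cmp a b) = rdeg a + rdeg b"
  unfolding rdeg_def by (simp add: deg_cmp distrib_left sum.distrib)

lemma rdeg_unit_deg: "deg l = unit_deg i \<Longrightarrow> rdeg l = r i"
  unfolding rdeg_def unit_deg_def by (simp add: if_distrib cong: if_cong)

lemma emeasure_Z:
  assumes l: "l \<in> L"
  shows "emeasure \<mu> (Z l) = ennreal (exp (- rdeg l)) * emeasure \<mu> (Z (src l))"
proof -
  let ?U = "cyl_bisection l"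
  have inj: "inj_on g_source ?U" using open_bisection_cyl_bisection[OF l] unfolding open_bisection_def by blast
  have "dot_cocycle r (THE g. g \<in> ?U \<and> g_source g = x) = rdeg l" if "x \<in> g_source ` ?U" for x
  proof -
    have "\<exists>!g. g \<in> ?U \<and> g_source g = x" using that inj by (auto simp: inj_on_def)
    then have "(THE g. g \<in> ?U \<and> g_source g = x) \<in> ?U" by (rule theI'[THEN conjunct1])
    then have "fst (snd (THE g. g \<in> ?U \<and> g_source g = x)) = (\<lambda>j. int (deg l j))"
      unfolding cyl_bisection_eq[OF l] by auto
    then show ?thesis unfolding dot_cocycle_def rdeg_def by simp
  qed
  then have "(\<lambda>x. ennreal (exp (- dot_cocycle r (THE g. g \<in> ?U \<and> g_source g = x))) * indicator (g_source ` ?U) x)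
      = (\<lambda>x. ennreal (exp (- rdeg l)) * indicator (Z (src l)) x)"
    using g_source_cyl_bisection[OF l] by (auto simp: fun_eq_iff split: split_indicator)
  moreover have "emeasure \<mu> (g_range ` ?U) = (\<integral>\<^sup>+ x. ennreal (exp (- dot_cocycle r
      (THE g. g \<in> ?U \<and> g_source g = x))) * indicator (g_source ` ?U) x \<partial>\<mu>)"
    using quasi_invariant open_bisection_cyl_bisection[OF l] unfolding quasi_invariant_def by blast
  ultimately have "emeasure \<mu> (Z l) = (\<integral>\<^sup>+ x. ennreal (exp (- rdeg l)) * indicator (Z (src l)) x \<partial>\<mu>)"
    using g_range_cyl_bisection[OF l] by simp
  also have "\<dots> = ennreal (exp (- rdeg l)) * emeasure \<mu> (Z (src l))"
    by (rule nn_integral_cmult_indicator[OF Z_sets[OF src_in[OF l]]])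
  finally show ?thesis .
qed

lemma measure_Z: "l \<in> L \<Longrightarrow> measure \<mu> (Z l) = exp (- rdeg l) * measure \<mu> (Z (src l))"
  using emeasure_Z finite_measure.emeasure_eq_measure[OF finite_measure_\<mu>]
  by (simp add: ennreal_mult[symmetric])

definition tail_mass :: "'m \<Rightarrow> ('k \<Rightarrow> nat) \<Rightarrow> real" where
  "tail_mass v n = measure \<mu> (Z v \<inter> {x. le_edeg n (fst x)})"

lemma vertex_Z_deg_ge_eq_UN:
  assumes v: "v \<in> vertices L src"
  shows "Z v \<inter> {x. le_edeg n (fst x)} = (\<Union>b\<in>vLambda v n. Z b)"
proof -
  have vL: "v \<in> L" and "deg v = (\<lambda>_. 0)" and sv: "src v = v"
    using vertexD[OF v] v unfolding vertices_def by auto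
  then have "Z v \<inter> {x. le_edeg n (fst x)} = (\<Union>b\<in>vLambda v n. Z (cmp v b))"
    using Z_deg_ge_eq_UN[OF vL, of n] by simp
  also have "\<dots> = (\<Union>b\<in>vLambda v n. Z b)"
    using cmp_rng_left unfolding vLambda_def by (intro SUP_cong) auto
  finally show ?thesis .
qed

lemma disjoint_family_Z_vLambda: "disjoint_family_on Z (vLambda v n)"
  unfolding disjoint_family_on_def vLambda_def using Z_disjoint by auto

lemma tail_sets: "v \<in> vertices L src \<Longrightarrow> Z v \<inter> {x. le_edeg n (fst x)} \<in> sets \<mu>"
  unfolding vertex_Z_deg_ge_eq_UN
  by (rule sets.finite_UN[OF finite_vLambda]) (use Z_sets vLambda_subset in blast)

lemma tail_mass_eq_sum:
  assumes "v \<in> vertices L src"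
  shows "tail_mass v n = (\<Sum>b\<in>vLambda v n. measure \<mu> (Z b))"
  unfolding tail_mass_def vertex_Z_deg_ge_eq_UN[OF assms]
  by (rule measure_finite_Union[OF finite_vLambda _ disjoint_family_Z_vLambda emeasure_finite])
     (use Z_sets vLambda_subset in blast)

lemma measure_Z_deg_ge:
  assumes a: "a \<in> L"
  shows "measure \<mu> (Z a \<inter> {x. le_edeg (\<lambda>j. deg a j + n j) (fst x)}) = exp (- rdeg a) * tail_mass (src a) n"
proof -
  have "measure \<mu> (Z a \<inter> {x. le_edeg (\<lambda>j. deg a j + n j) (fst x)})
      = (\<Sum>b\<in>vLambda (src a) n. measure \<mu> (Z (cmp a b)))"
    unfolding Z_deg_ge_eq_UN[OF a]
    by (rule measure_finite_Union[OF finite_vLambda _ disjoint_family_Z_cmp[OF a] emeasure_finite])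
       (use Z_sets a cmp_in in \<open>auto simp: vLambda_def\<close>)
  also have "\<dots> = (\<Sum>b\<in>vLambda (src a) n. exp (- rdeg a) * measure \<mu> (Z b))"
  proof (rule sum.cong[OF refl])
    fix b assume "b \<in> vLambda (src a) n"
    then have b: "b \<in> L" "src a = rng b" unfolding vLambda_def by auto
    have "measure \<mu> (Z (cmp a b)) = exp (- rdeg a) * (exp (- rdeg b) * measure \<mu> (Z (src b)))"
      using measure_Z[OF cmp_in[OF a b]] rdeg_cmp[OF a b] src_cmp[OF a b] by (simp add: exp_diff exp_minus field_simps)
    then show "measure \<mu> (Z (cmp a b)) = exp (- rdeg a) * measure \<mu> (Z b)"
      using measure_Z[OF b(1)] by simp
  qed
  also have "\<dots> = exp (- rdeg a) * tail_mass (src a) n"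
    using tail_mass_eq_sum[of "src a"] src_in[OF a] src_src[OF a]
    by (simp add: sum_distrib_left vertices_def)
  finally show ?thesis .
qed

lemma tail_mass_add:
  assumes v: "v \<in> vertices L src"
  shows "tail_mass v (\<lambda>j. m j + n j) = (\<Sum>a\<in>vLambda v m. exp (- rdeg a) * tail_mass (src a) n)"
proof -
  let ?T = "\<lambda>a. Z a \<inter> {x. le_edeg (\<lambda>j. deg a j + n j) (fst x)}"
  have "{x. le_edeg (\<lambda>j. m j + n j) (fst x)} \<subseteq> {x. le_edeg m (fst x)}"
    using le_edeg_trans[of m "\<lambda>j. m j + n j"] by (auto simp: le_fun_def)
  then have "Z v \<inter> {x. le_edeg (\<lambda>j. m j + n j) (fst x)} = (\<Union>a\<in>vLambda v m. ?T a)"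
    using vertex_Z_deg_ge_eq_UN[OF v, of m] unfolding vLambda_def by blast
  moreover have "disjoint_family_on ?T (vLambda v m)"
    using disjoint_family_Z_vLambda unfolding disjoint_family_on_def by blast
  moreover have "?T ` vLambda v m \<subseteq> sets \<mu>"
    using Z_deg_ge_sets vLambda_subset by blast
  ultimately have "tail_mass v (\<lambda>j. m j + n j) = (\<Sum>a\<in>vLambda v m. measure \<mu> (?T a))"
    unfolding tail_mass_def using measure_finite_Union[OF finite_vLambda _ _ emeasure_finite] by simp
  then show ?thesis using measure_Z_deg_ge vLambda_subset by (simp add: subset_iff)
qed

lemma tail_mass_zero: "tail_mass v (\<lambda>_. 0) = measure \<mu> (Z v)"
  unfolding tail_mass_def by simp

lemma tail_mass_mono:
  assumes "v \<in> vertices L src" "m \<le> n"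
  shows "tail_mass v n \<le> tail_mass v m"
  unfolding tail_mass_def
  by (rule finite_measure.finite_measure_mono[OF finite_measure_\<mu> _ tail_sets[OF assms(1)]])
     (use le_edeg_trans[OF assms(2)] in blast)

abbreviation "vs \<equiv> vlist L src"
abbreviation "nV \<equiv> length vs"

lemma finite_vertices: "finite (vertices L src)"
proof (rule finite_subset)
  show "finite {l \<in> L. deg l = (\<lambda>_. 0)}" using finite unfolding finite_kgraph_def by blast
qed (use vertexD in auto)

lemma distinct_vlist: "distinct vs" and set_vlist: "set vs = vertices L src"
proof -
  have "\<exists>xs. distinct xs \<and> set xs = vertices L src"
    using finite_distinct_list[OF finite_vertices] by metis
  from someI_ex[OF this] show "distinct vs" "set vs = vertices L src" unfolding vlist_def by auto
qed

lemma nth_vlist_vertex: "a < nV \<Longrightarrow> vs ! a \<in> vertices L src"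
  using set_vlist nth_mem by blast

lemma W_eq_UN_vlist: "W = (\<Union>a<nV. Z (vs ! a))"
  unfolding W_eq_UN_vertices set_vlist[symmetric] set_conv_nth by blast

lemma vertex_matrix_tail_mass:
  assumes a: "a < nV"
  shows "(\<Sum>b<nV. vertex_matrix L src rng deg i $$ (a, b) * tail_mass (vs ! b) n)
    = exp (r i) * tail_mass (vs ! a) (\<lambda>j. unit_deg i j + n j)"
proof -
  let ?E = "vLambda (vs ! a) (unit_deg i)"
  have "src ` ?E \<subseteq> set vs"
    unfolding set_vlist vertices_def vLambda_def using src_in src_src by auto
  from sum_group_by_distinct_list[OF finite_vLambda this distinct_vlist, of "\<lambda>w. tail_mass w n"]
  have "(\<Sum>e\<in>?E. tail_mass (src e) n)
      = (\<Sum>b<nV. real (card {e\<in>?E. src e = vs ! b}) * tail_mass (vs ! b) n)" .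
  also have "\<dots> = (\<Sum>b<nV. vertex_matrix L src rng deg i $$ (a, b) * tail_mass (vs ! b) n)"
  proof (rule sum.cong[OF refl])
    fix b assume "b \<in> {..<nV}"
    moreover have "{e\<in>?E. src e = vs ! b} = {l\<in>L. rng l = vs ! a \<and> deg l = unit_deg i \<and> src l = vs ! b}"
      unfolding vLambda_def by blast
    ultimately show "real (card {e\<in>?E. src e = vs ! b}) * tail_mass (vs ! b) n
        = vertex_matrix L src rng deg i $$ (a, b) * tail_mass (vs ! b) n"
      using a by (simp add: vertex_matrix_index)
  qed
  finally have "(\<Sum>b<nV. vertex_matrix L src rng deg i $$ (a, b) * tail_mass (vs ! b) n)
      = (\<Sum>e\<in>?E. tail_mass (src e) n)" ..
  moreover have "tail_mass (vs ! a) (\<lambda>j. unit_deg i j + n j) = (\<Sum>e\<in>?E. exp (- r i) * tail_mass (src e) n)"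
    unfolding tail_mass_add[OF nth_vlist_vertex[OF a]]
    by (intro sum.cong refl) (simp add: vLambda_def rdeg_unit_deg)
  ultimately show ?thesis by (simp add: sum_distrib_left[symmetric] exp_minus)
qed

lemma subinvariant_vertex_mass:
  "subinvariant_vector (vertex_matrix L src rng deg i) nV (\<lambda>b. measure \<mu> (Z (vs ! b))) (exp (r i))"
proof
  show "vertex_matrix L src rng deg i \<in> carrier_mat nV nV" by (rule vertex_matrix_carrier)
  fix a assume a: "a < nV"
  show "0 \<le> measure \<mu> (Z (vs ! a))" by simp
  fix b assume "b < nV"
  with a show "(0::real) \<le> vertex_matrix L src rng deg i $$ (a, b)" by (simp add: vertex_matrix_index)
next
  fix a assume a: "a < nV"
  have "tail_mass (vs ! a) (unit_deg i) \<le> tail_mass (vs ! a) (\<lambda>_. 0)"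
    using tail_mass_mono[OF nth_vlist_vertex[OF a]] by (simp add: le_fun_def)
  then show "(\<Sum>b<nV. vertex_matrix L src rng deg i $$ (a, b) * measure \<mu> (Z (vs ! b)))
      \<le> exp (r i) * measure \<mu> (Z (vs ! a))"
    using vertex_matrix_tail_mass[OF a, of i "\<lambda>_. 0"] by (simp add: tail_mass_zero)
qed

lemma exists_vertex_measure_pos:
  assumes "S \<in> sets \<mu>" "emeasure \<mu> S \<noteq> 0"
  shows "\<exists>a<nV. measure \<mu> (Z (vs ! a) \<inter> S) > 0"
proof (rule ccontr)
  assume none: "\<not> ?thesis"
  have zero: "measure \<mu> (Z (vs ! a) \<inter> S) = 0" if "a < nV" for a
  proof -
    have "\<not> 0 < measure \<mu> (Z (vs ! a) \<inter> S)" using that none by blast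
    then show ?thesis using measure_nonneg[of \<mu> "Z (vs ! a) \<inter> S"] by linarith
  qed
  have "S \<subseteq> W" using sets.sets_into_space[OF assms(1)] space_\<mu> by simp
  then have "S = (\<Union>a<nV. Z (vs ! a) \<inter> S)"
    using W_eq_UN_vlist by blast
  moreover have "Z (vs ! a) \<inter> S \<in> sets \<mu>" if "a < nV" for a
    using Z_sets nth_vlist_vertex[OF that] vertexD assms(1) by blast
  ultimately have "measure \<mu> S \<le> (\<Sum>a<nV. measure \<mu> (Z (vs ! a) \<inter> S))"
    using measure_UNION_le[of "{..<nV}" "\<lambda>a. Z (vs ! a) \<inter> S" \<mu>] by simp
  then have "measure \<mu> S = 0" using zero measure_nonneg[of \<mu> S] by simp
  then show False
    using assms finite_measure.emeasure_eq_measure[OF finite_measure_\<mu>] by simp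
qed

lemma ln_rho_le:
  assumes "irreducible_mat (vertex_matrix L src rng deg i)" "r i > 0"
  shows "ln (rho L src rng deg i) \<le> r i"
proof -
  interpret subinvariant_vector "vertex_matrix L src rng deg i" nV "\<lambda>b. measure \<mu> (Z (vs ! b))" "exp (r i)"
    by (rule subinvariant_vertex_mass)
  have "emeasure \<mu> (space \<mu>) \<noteq> 0" using prob prob_space.emeasure_space_1 by fastforce
  then obtain b where b: "b < nV" "measure \<mu> (Z (vs ! b) \<inter> space \<mu>) > 0"
    using exists_vertex_measure_pos by blast
  then have "measure \<mu> (Z (vs ! b)) > 0" using Z_sets nth_vlist_vertex vertexD sets.Int_space_eq2 by metis
  then have "measure \<mu> (Z (vs ! a)) > 0" if "a < nV" for a
    using pos_of_irreducible[OF assms(1) that b(1)] by blast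
  moreover have "nV > 0" using b(1) by linarith
  ultimately have "rho L src rng deg i \<le> exp (r i)"
    unfolding rho_def vertex_matrix_complex by (rule spectral_radius_le)
  moreover have "0 \<le> rho L src rng deg i"
    unfolding rho_def using spectral_radius_nonneg[OF vertex_matrix_carrier] \<open>nV > 0\<close> by auto
  ultimately show ?thesis
    \<comment> \<open>\<open>ln 0 = 0\<close>, so \<open>r i > 0\<close> is what handles a vanishing spectral radius\<close>
    using assms(2) by (cases "rho L src rng deg i = 0") (auto simp: ln_le_cancel_iff[symmetric])
qed

lemma INT_tail_eq:
  "(\<Inter>N. Z v \<inter> {x. le_edeg (\<lambda>j. N * unit_deg i j) (fst x)}) = Z v \<inter> {x. fst x i = \<infinity>}"
  unfolding le_edeg_unit_deg_iff using all_enat_le_iff by auto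

lemma infinite_deg_sets: "v \<in> vertices L src \<Longrightarrow> Z v \<inter> {x. fst x i = \<infinity>} \<in> sets \<mu>"
  unfolding INT_tail_eq[symmetric] by (intro sets.countable_INT') (auto intro: tail_sets)

lemma tail_mass_tendsto:
  assumes "v \<in> vertices L src"
  shows "(\<lambda>N. tail_mass v (\<lambda>j. N * unit_deg i j)) \<longlonglongrightarrow> measure \<mu> (Z v \<inter> {x. fst x i = \<infinity>})"
proof -
  let ?A = "\<lambda>N. Z v \<inter> {x. le_edeg (\<lambda>j. N * unit_deg i j) (fst x)}"
  have "decseq ?A"
    unfolding decseq_def le_edeg_unit_deg_iff by (auto intro: order_trans[rotated])
  from finite_measure.finite_Lim_measure_decseq[OF finite_measure_\<mu> _ this] show ?thesis
    using tail_sets[OF assms] unfolding tail_mass_def INT_tail_eq by blast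
qed

lemma vertex_matrix_infinite_mass:
  assumes a: "a < nV"
  shows "(\<Sum>b<nV. vertex_matrix L src rng deg i $$ (a, b) * measure \<mu> (Z (vs ! b) \<inter> {x. fst x i = \<infinity>}))
    = exp (r i) * measure \<mu> (Z (vs ! a) \<inter> {x. fst x i = \<infinity>})"
proof -
  let ?h = "\<lambda>b. measure \<mu> (Z (vs ! b) \<inter> {x. fst x i = \<infinity>})"
  let ?t = "\<lambda>N b. tail_mass (vs ! b) (\<lambda>j. N * unit_deg i j)"
  have "(\<Sum>b<nV. vertex_matrix L src rng deg i $$ (a, b) * ?t N b) = exp (r i) * ?t (Suc N) a" for N
    using vertex_matrix_tail_mass[OF a, of i "\<lambda>j. N * unit_deg i j"] by simp
  moreover have "(\<lambda>N. \<Sum>b<nV. vertex_matrix L src rng deg i $$ (a, b) * ?t N b)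
      \<longlonglongrightarrow> (\<Sum>b<nV. vertex_matrix L src rng deg i $$ (a, b) * ?h b)"
    by (intro tendsto_sum tendsto_mult_left tail_mass_tendsto nth_vlist_vertex) simp
  ultimately have "(\<lambda>N. exp (r i) * ?t (Suc N) a) \<longlonglongrightarrow> (\<Sum>b<nV. vertex_matrix L src rng deg i $$ (a, b) * ?h b)"
    by simp
  moreover have "(\<lambda>N. exp (r i) * ?t (Suc N) a) \<longlonglongrightarrow> exp (r i) * ?h a"
    using tail_mass_tendsto[OF nth_vlist_vertex[OF a]] by (intro tendsto_mult_left) (rule LIMSEQ_Suc)
  ultimately show ?thesis by (rule LIMSEQ_unique)
qed

lemma infinite_deg_W_sets: "{x \<in> W. fst x i = \<infinity>} \<in> sets \<mu>"
proof -
  have "{x \<in> W. fst x i = \<infinity>} = (\<Union>a<nV. Z (vs ! a) \<inter> {x. fst x i = \<infinity>})"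
    using W_eq_UN_vlist by blast
  also have "\<dots> \<in> sets \<mu>"
    using infinite_deg_sets[OF nth_vlist_vertex] by (intro sets.finite_UN) auto
  finally show ?thesis .
qed

lemma r_eq_ln_rho:
  assumes "irreducible_mat (vertex_matrix L src rng deg i)" "r i > 0"
    and "emeasure \<mu> {x \<in> W. fst x i = \<infinity>} \<noteq> 0"
  shows "r i = ln (rho L src rng deg i)"
proof -
  from exists_vertex_measure_pos[OF infinite_deg_W_sets assms(3)] obtain a0 where a0: "a0 < nV"
    "measure \<mu> (Z (vs ! a0) \<inter> {x \<in> W. fst x i = \<infinity>}) > 0" by blast
  moreover have "Z (vs ! a0) \<inter> {x \<in> W. fst x i = \<infinity>} = Z (vs ! a0) \<inter> {x. fst x i = \<infinity>}"
    unfolding cylZ_def by blast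
  ultimately have "eigenvalue (map_mat complex_of_real (vertex_matrix L src rng deg i)) (complex_of_real (exp (r i)))"
    using eigenvalue_of_real_eigenfunction[OF vertex_matrix_carrier a0(1) _ vertex_matrix_infinite_mass]
    by simp
  then have "exp (r i) \<le> rho L src rng deg i"
    unfolding rho_def vertex_matrix_complex spectral_radius_def
    using spectral_radius_mem_max(2)[of "map_mat complex_of_real (vertex_matrix L src rng deg i)" nV]
      vertex_matrix_carrier a0(1) unfolding spectral_radius_def spectrum_def by fastforce
  moreover from this have "0 < rho L src rng deg i" using exp_gt_zero[of "r i"] by linarith
  ultimately have "r i \<le> ln (rho L src rng deg i)"
    using ln_le_cancel_iff[of "exp (r i)" "rho L src rng deg i"] by simp
  then show ?thesis using ln_rho_le[OF assms(1,2)] by simp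
qed

end

theorem lemmaB2:
  fixes L :: "'m set" and src rng :: "'m \<Rightarrow> 'm" and cmp :: "'m \<Rightarrow> 'm \<Rightarrow> 'm"
    and deg :: "'m \<Rightarrow> ('k::finite \<Rightarrow> nat)"
    and r :: "'k \<Rightarrow> real" and \<mu> :: "('k, 'm) kpath measure"
  assumes "kgraph L src rng cmp deg"
    and "finite_kgraph L deg"
    and "coord_irreducible L src rng deg"
    and "\<forall>i. r i > 0"
    and "borel_measure_on_W L src rng cmp deg \<mu>"
    and "prob_space \<mu>"
    and "emeasure \<mu> (WL L src rng cmp deg) \<noteq> 0"
    and "quasi_invariant L src rng cmp deg (dot_cocycle r) \<mu>"
  shows "(\<forall>i. r i \<ge> ln (rho L src rng deg i))
    \<and> (\<forall>l. emeasure \<mu> {x \<in> WL L src rng cmp deg. fst x l = \<infinity>} \<noteq> 0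
            \<longrightarrow> r l = ln (rho L src rng deg l))
    \<and> (emeasure \<mu> {x \<in> WL L src rng cmp deg. \<forall>j. fst x j = \<infinity>} \<noteq> 0
            \<longrightarrow> (\<forall>i. r i = ln (rho L src rng deg i)))"
proof -
  interpret qi_measure L src rng cmp deg r \<mu>
    using assms unfolding qi_measure_def qi_measure_axioms_def k_graph_def by blast
  have irr: "irreducible_mat (vertex_matrix L src rng deg i)" for i
    using assms(3) unfolding coord_irreducible_def by blast
  have eq_of_infinite_mass: "r l = ln (rho L src rng deg l)" if "emeasure \<mu> {x \<in> W. fst x l = \<infinity>} \<noteq> 0" for l
    using r_eq_ln_rho[OF irr _ that] assms(4) by blast
  have "r i = ln (rho L src rng deg i)" if "emeasure \<mu> {x \<in> W. \<forall>j. fst x j = \<infinity>} \<noteq> 0" for i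
  proof (rule eq_of_infinite_mass)
    have "emeasure \<mu> {x \<in> W. \<forall>j. fst x j = \<infinity>} \<le> emeasure \<mu> {x \<in> W. fst x i = \<infinity>}"
      by (rule emeasure_mono[OF _ infinite_deg_W_sets]) auto
    then show "emeasure \<mu> {x \<in> W. fst x i = \<infinity>} \<noteq> 0" using that by auto
  qed
  then show ?thesis using ln_rho_le[OF irr] assms(4) eq_of_infinite_mass by blast
qed

end
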